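(* Let $M \ge 2$ be an integer, $\mathcal A \subset \{0,\dots,M-1\}$ nonempty, $\chi \in C_c^\infty((0,1);[0,1])$, $\delta = \log|\mathcal A|/\log M$, and let $N = KM$ with $K \in \mathbb N$. Let $\ell \le \frac{\log N}{\log M}$ be a positive integer and let $d_1,\dots,d_\ell$ be real numbers with $$0 < \frac{d_j}{N} \le \frac{2}{M} d(\operatorname{supp}\chi, 0), \qquad j = 1,\dots,\ell.$$ Then there exist a Fourier multiplier $A : \ell^2_N \to \ell^2_N$ (i.e. $A = \mathcal F_N^* D \mathcal F_N$ with $D$ diagonal) and families of operators $Z(\lambda), \mathcal R(\lambda) : \ell^2_N \to \ell^2_N$, $\lambda \in \mathbb C \setminus \{0\}$, such that $$I = Z(\lambda)(B_N - \lambda) + \mathcal R(\lambda) + A,$$ and 1. $\displaystyle \|\mathcal R(\lambda)\|_{\ell^2_N\to\ell^2_N} \le \sum_{j=0}^{\ell-1} |\lambda|^{-j-1} \tilde g_\chi(d_{\ell-j})$, where $\tilde g_\chi:(0,\infty)\to[0,\infty)$ is a function satisfying: for every $n$ there is $C_n>0$ with $\tilde g_\chi(x)\le C_n x^{-n}$, and if $\chi \in \mathcal G^s_c((0,1))$ for some $s>1$ then $\tilde g_\chi(x) \le Ce^{-cx^{1/s}}$ for some $C,c>0$, all constants depending only on $\chi$; 2. $\displaystyle \operatorname{rank} A \le 2 M^{\ell\delta}\Big[\frac{N}{M^\ell} + 2\sum_{k=1}^{\ell}\frac{d_k}{M^{\ell-k}}\Big]$.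
   Context: For $N \in \mathbb N$, $\mathbb Z_N \simeq \{0,\dots,N-1\}$, $\ell^2_N = \ell^2(\mathbb Z_N)$, and $\mathcal F_N u(j) = N^{-1/2}\sum_{m=0}^{N-1} e^{-2\pi i jm/N} u(m)$. For $N = KM$ and $a \in \{0,\dots,M-1\}$, $\Pi_a:\ell^2_N\to\ell^2_K$, $\Pi_a u(j) = u(j+aK)$, and the quantum open baker's map is $B_N = \sum_{a \in \mathcal A} \mathcal F_N^*\Pi_a^* \chi_K \mathcal F_K \chi_K \Pi_a$ with $\chi_K$ multiplication by $j\mapsto\chi(j/K)$ on $\ell^2_K$. On $[0,1]$ with $0,1$ identified, $d(x,y)=\min\{|x-y|,1-|x-y|\}$ and $d(U,V)=\inf_{x\in U,y\in V}d(x,y)$. $\mathcal G^s_c((0,1))$ ($s>1$) is the set of $f\in C_c^\infty(\mathbb R)$, $\operatorname{supp} f\subset(0,1)$, such that for every compact $K'$ there is $C_{K',f}$ with $\sup_{K'}|\partial^\alpha f| \le C_{K',f}^{\alpha+1}(\alpha!)^s$ for all $\alpha\ge 0$. *)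

theory Defs
  imports "HOL-Analysis.Analysis" "Jordan_Normal_Form.Schur_Decomposition" "Jordan_Normal_Form.DL_Rank"
begin

definition circ_dist :: "real \<Rightarrow> real \<Rightarrow> real" where
  "circ_dist x y = min \<bar>x - y\<bar> (1 - \<bar>x - y\<bar>)"

definition set_circ_dist :: "real set \<Rightarrow> real set \<Rightarrow> real" where
  "set_circ_dist U V = Inf {circ_dist x y | x y. x \<in> U \<and> y \<in> V}"

definition fsupp :: "(real \<Rightarrow> real) \<Rightarrow> real set" where
  "fsupp f = closure {x. f x \<noteq> 0}"

definition smooth_real :: "(real \<Rightarrow> real) \<Rightarrow> bool" where
  "smooth_real f \<longleftrightarrow> (\<forall>n x. (deriv ^^ n) f differentiable (at x))"

definition Cc_inf_01 :: "(real \<Rightarrow> real) \<Rightarrow> bool" where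
  "Cc_inf_01 f \<longleftrightarrow> smooth_real f \<and> compact (fsupp f) \<and> fsupp f \<subseteq> {0<..<1}"

definition gevrey_c01 :: "real \<Rightarrow> (real \<Rightarrow> real) \<Rightarrow> bool" where
  "gevrey_c01 s f \<longleftrightarrow> Cc_inf_01 f \<and>
     (\<forall>K'. compact K' \<longrightarrow> (\<exists>C. \<forall>\<alpha>::nat. \<forall>x\<in>K'.
         \<bar>(deriv ^^ \<alpha>) f x\<bar> \<le> C ^ (\<alpha> + 1) * (fact \<alpha>) powr s))"

definition l2norm :: "complex vec \<Rightarrow> real" where
  "l2norm u = sqrt (\<Sum>i<dim_vec u. (cmod (vec_index u i))\<^sup>2)"

definition op_norm :: "nat \<Rightarrow> complex mat \<Rightarrow> real" where
  "op_norm N A = Sup {l2norm (A *\<^sub>v u) | u. u \<in> carrier_vec N \<and> l2norm u \<le> 1}"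

definition fourier :: "nat \<Rightarrow> complex mat" where
  "fourier N = mat N N (\<lambda>(j, m).
      exp (- 2 * pi * \<i> * of_nat j * of_nat m / of_nat N) / complex_of_real (sqrt (real N)))"

definition Pi_op :: "nat \<Rightarrow> nat \<Rightarrow> nat \<Rightarrow> complex mat" where
  "Pi_op K M a = mat K (K * M) (\<lambda>(j, m). if m = j + a * K then 1 else 0)"

definition chi_op :: "(real \<Rightarrow> real) \<Rightarrow> nat \<Rightarrow> complex mat" where
  "chi_op chi K = mat K K (\<lambda>(i, j). if i = j then complex_of_real (chi (real j / real K)) else 0)"

definition baker :: "nat \<Rightarrow> nat set \<Rightarrow> (real \<Rightarrow> real) \<Rightarrow> nat \<Rightarrow> complex mat" where
  "baker M \<A> chi K = mat (K * M) (K * M) (\<lambda>(i, j).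
     \<Sum>a\<in>\<A>. (mat_adjoint (fourier (K * M)) * mat_adjoint (Pi_op K M a) * chi_op chi K
              * fourier K * chi_op chi K * Pi_op K M a) $$ (i, j))"

definition fourier_multiplier :: "nat \<Rightarrow> complex mat \<Rightarrow> bool" where
  "fourier_multiplier N A \<longleftrightarrow> (\<exists>D. D \<in> carrier_mat N N \<and> diagonal_mat D \<and>
      A = mat_adjoint (fourier N) * D * fourier N)"

end

(*
  In frequency variables the baker's map is B_N = F_N^* T, where T is block diagonal with blocks
  chi_K F_K chi_K. Let U_0 = [0,1], let U_(k+1) be the d_(k+1)/N-neighbourhood of the images
  (a + U_k)/M, a in \<A>, and let X_k be the Fourier projection onto the frequencies xi with
  xi/N in U_k. A recursion produces Z, R with 1 - X_l = Z (B_N - z) + R, where R is a sum of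
  terms z^(-j-1) (1 - X_(k+1)) B_N X_k composed with contractions.

  The rank of X_l is the number of frequencies in U_l, which is covered by |\<A>|^l intervals of
  length L_l = L_(l-1)/M + 2 d_l/N. In (1 - X_(k+1)) B_N X_k the input and output frequencies are
  d_(k+1)-separated, so only kernel entries of T F_N^* with K |theta| >= d/2 survive, and n-fold
  summation by parts bounds these by (n + 1) sup |chi^(n)| / (K |theta|)^n. A Schur test turns
  this into the operator bound g(d_(k+1)); optimising over n gives the polynomial and, for
  Gevrey chi, the stretched exponential decay of g.
*)
theory Submission
  imports Defs
begin

lemma not_in_fsupp_eq_0: "x \<notin> fsupp f \<Longrightarrow> f x = 0"
  unfolding fsupp_def by (metis (mono_tags, lifting) closure_subset mem_Collect_eq subsetD)

lemma Cc_inf_01_eq_0_outside: assumes "Cc_inf_01 f" "x \<le> 0 \<or> x \<ge> 1" shows "f x = 0"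
  using assms unfolding Cc_inf_01_def by (intro not_in_fsupp_eq_0) auto

lemma smooth_real_DERIV:
  assumes "smooth_real f"
  shows "((deriv ^^ n) f has_real_derivative (deriv ^^ Suc n) f x) (at x)"
  using assms unfolding smooth_real_def by (simp add: DERIV_deriv_iff_real_differentiable)

lemma smooth_real_higher_deriv_eq_0_outside:
  assumes "smooth_real f" "x \<notin> fsupp f"
  shows "(deriv ^^ n) f x = 0"
  using assms(2)
proof (induction n arbitrary: x)
  case 0
  then show ?case by (simp add: not_in_fsupp_eq_0)
next
  case (Suc n)
  have "((\<lambda>_. 0) has_real_derivative 0) (at x)" by simp
  moreover have "open (- fsupp f)" unfolding fsupp_def by auto
  ultimately have "((deriv ^^ n) f has_real_derivative 0) (at x)"
    by (rule has_field_derivative_transform_within_open) (use Suc in auto)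
  then show ?case by (simp add: DERIV_imp_deriv)
qed

lemma Cc_inf_01_higher_deriv_bounded:
  assumes "Cc_inf_01 f" shows "\<exists>B. \<forall>x. \<bar>(deriv ^^ n) f x\<bar> \<le> B"
proof -
  have sm: "smooth_real f" and sub: "fsupp f \<subseteq> {0<..<1}" using assms unfolding Cc_inf_01_def by auto
  have "continuous_on {0..1} ((deriv ^^ n) f)"
    using smooth_real_DERIV[OF sm] DERIV_isCont continuous_at_imp_continuous_on by blast
  then have "compact ((deriv ^^ n) f ` {0..1})" by (rule compact_continuous_image) simp
  then obtain B where B: "\<forall>y\<in>(deriv ^^ n) f ` {0..1}. norm y \<le> B"
    using compact_imp_bounded bounded_iff by metis
  have "\<bar>(deriv ^^ n) f x\<bar> \<le> max B 0" for x
  proof (cases "x \<in> {0..1}")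
    case True then show ?thesis using B by force
  next
    case False then have "x \<notin> fsupp f" using sub by auto
    then show ?thesis using smooth_real_higher_deriv_eq_0_outside[OF sm] by simp
  qed
  then show ?thesis by blast
qed

definition deriv_sup :: "(real \<Rightarrow> real) \<Rightarrow> nat \<Rightarrow> real" where
  "deriv_sup f n = Sup (range (\<lambda>x. \<bar>(deriv ^^ n) f x\<bar>))"

lemma abs_higher_deriv_le_deriv_sup:
  assumes "Cc_inf_01 f" shows "\<bar>(deriv ^^ n) f x\<bar> \<le> deriv_sup f n"
proof -
  obtain B where "\<forall>x. \<bar>(deriv ^^ n) f x\<bar> \<le> B" using Cc_inf_01_higher_deriv_bounded[OF assms] by blast
  then have "bdd_above (range (\<lambda>x. \<bar>(deriv ^^ n) f x\<bar>))" by (auto intro: bdd_aboveI)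
  then show ?thesis unfolding deriv_sup_def by (intro cSup_upper) auto
qed

lemma deriv_sup_nonneg: "Cc_inf_01 f \<Longrightarrow> 0 \<le> deriv_sup f n"
  using abs_higher_deriv_le_deriv_sup[of f n 0] by linarith

lemma deriv_sup_le: "(\<And>x. \<bar>(deriv ^^ n) f x\<bar> \<le> C) \<Longrightarrow> deriv_sup f n \<le> C"
  unfolding deriv_sup_def by (intro cSup_least) auto

section \<open>Finite differences and summation by parts\<close>

definition shift_diff :: "real \<Rightarrow> (real \<Rightarrow> real) \<Rightarrow> real \<Rightarrow> real" where
  "shift_diff h F = (\<lambda>x. F (x - h) - F x)"

lemma funpow_shift_diff_Suc:
  "(shift_diff h ^^ Suc n) F x = (shift_diff h ^^ n) F (x - h) - (shift_diff h ^^ n) F x"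
  by (simp add: shift_diff_def)

lemma DERIV_shift_diff:
  assumes "smooth_real f"
  shows "(shift_diff h ((deriv ^^ k) f) has_real_derivative shift_diff h ((deriv ^^ Suc k) f) x) (at x)"
proof -
  have "((\<lambda>x. (deriv ^^ k) f (x + - h)) has_real_derivative (deriv ^^ Suc k) f (x + - h)) (at x)"
    using DERIV_shift smooth_real_DERIV[OF assms] by blast
  then show ?thesis
    unfolding shift_diff_def using DERIV_diff[OF _ smooth_real_DERIV[OF assms]] by simp
qed

lemma higher_deriv_shift_diff:
  assumes "smooth_real f"
  shows "(deriv ^^ k) (shift_diff h f) = shift_diff h ((deriv ^^ k) f)"
proof (induction k)
  case 0 show ?case by simp
next
  case (Suc k)
  have "deriv (shift_diff h ((deriv ^^ k) f)) = shift_diff h ((deriv ^^ Suc k) f)"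
    using DERIV_imp_deriv[OF DERIV_shift_diff[OF assms]] by (intro ext)
  then show ?case using Suc.IH by simp
qed

lemma smooth_real_shift_diff: assumes "smooth_real f" shows "smooth_real (shift_diff h f)"
  unfolding smooth_real_def higher_deriv_shift_diff[OF assms] real_differentiable_def
  using DERIV_shift_diff[OF assms] by blast

lemma abs_funpow_shift_diff_le:
  assumes "0 \<le> h" "smooth_real f" "\<And>x. \<bar>(deriv ^^ n) f x\<bar> \<le> B"
  shows "\<bar>(shift_diff h ^^ n) f x\<bar> \<le> h ^ n * B"
  using assms(2,3)
proof (induction n arbitrary: f B x)
  case 0 then show ?case by simp
next
  case (Suc n)
  have step: "\<bar>(deriv ^^ n) (shift_diff h f) y\<bar> \<le> h * B" for y
  proof -
    have "\<bar>(deriv ^^ n) f (y - h) - (deriv ^^ n) f y\<bar> \<le> h * B"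
    proof (cases "h = 0")
      case True then show ?thesis by simp
    next
      case False
      then have "y - h < y" using assms(1) by simp
      from MVT2[OF this, of "(deriv ^^ n) f" "(deriv ^^ Suc n) f"]
      obtain z where "(deriv ^^ n) f y - (deriv ^^ n) f (y - h) = h * (deriv ^^ Suc n) f z"
        using smooth_real_DERIV[OF Suc.prems(1)] by auto
      then have "\<bar>(deriv ^^ n) f (y - h) - (deriv ^^ n) f y\<bar> = h * \<bar>(deriv ^^ Suc n) f z\<bar>"
        using assms(1) by (simp add: abs_mult abs_minus_commute)
      also have "\<dots> \<le> h * B" using Suc.prems(2) assms(1) by (simp add: mult_left_mono)
      finally show ?thesis .
    qed
    then show ?thesis unfolding higher_deriv_shift_diff[OF Suc.prems(1)] by (simp add: shift_diff_def)
  qed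
  have "\<bar>(shift_diff h ^^ n) (shift_diff h f) x\<bar> \<le> h ^ n * (h * B)"
    by (rule Suc.IH[OF smooth_real_shift_diff[OF Suc.prems(1)] step])
  then show ?case by (simp only: funpow_Suc_right comp_apply) (simp add: ac_simps)
qed

lemma funpow_shift_diff_eq_0_left:
  assumes "0 \<le> h" "\<And>x. x \<le> 0 \<Longrightarrow> f x = 0" "x \<le> 0"
  shows "(shift_diff h ^^ n) f x = 0"
  using assms(3)
proof (induction n arbitrary: x)
  case 0 then show ?case using assms(2) by simp
next
  case (Suc n)
  have "x - h \<le> 0" using Suc.prems assms(1) by simp
  then show ?case using Suc by (simp only: funpow_shift_diff_Suc)
qed

text \<open>At \<open>m = 0\<close> the truncated subtraction gives \<open>seq_diff c 0 = 0\<close>.\<close>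
definition seq_diff :: "(nat \<Rightarrow> real) \<Rightarrow> nat \<Rightarrow> real" where
  "seq_diff c = (\<lambda>m. c (m - 1) - c m)"

lemma summation_by_parts_step:
  fixes \<omega> :: complex
  assumes "c 0 = 0" "\<And>m. L \<le> m \<Longrightarrow> c m = 0"
  shows "(\<omega> - 1) * (\<Sum>m<L. of_real (c m) * \<omega> ^ m) = (\<Sum>m<Suc L. of_real (seq_diff c m) * \<omega> ^ m)"
proof -
  have "(\<Sum>m<Suc L. of_real (seq_diff c m) * \<omega> ^ m) =
     (\<Sum>m<Suc L. of_real (c (m - 1)) * \<omega> ^ m) - (\<Sum>m<Suc L. of_real (c m) * \<omega> ^ m)"
    by (simp add: seq_diff_def sum_subtractf algebra_simps)
  also have "(\<Sum>m<Suc L. of_real (c (m - 1)) * \<omega> ^ m) = (\<Sum>m<L. of_real (c m) * \<omega> ^ Suc m)"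
    using sum.lessThan_Suc_shift[of "\<lambda>m. of_real (c (m - 1)) * \<omega> ^ m" L] assms(1) by simp
  also have "(\<Sum>m<Suc L. of_real (c m) * \<omega> ^ m) = (\<Sum>m<L. of_real (c m) * \<omega> ^ m)"
    using assms(2) by simp
  finally show ?thesis by (simp add: sum_distrib_left sum_subtractf algebra_simps)
qed

lemma summation_by_parts:
  fixes \<omega> :: complex
  assumes "c 0 = 0" "\<And>m. L \<le> m \<Longrightarrow> c m = 0"
  shows "(\<omega> - 1) ^ n * (\<Sum>m<L. of_real (c m) * \<omega> ^ m)
           = (\<Sum>m<L + n. of_real ((seq_diff ^^ n) c m) * \<omega> ^ m)"
  using assms
proof (induction n arbitrary: c L)
  case 0 then show ?case by simp
next
  case (Suc n)
  have "(\<omega> - 1) ^ Suc n * (\<Sum>m<L. of_real (c m) * \<omega> ^ m)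
      = (\<omega> - 1) ^ n * (\<Sum>m<Suc L. of_real (seq_diff c m) * \<omega> ^ m)"
    using summation_by_parts_step[of c L, OF Suc.prems] by (simp add: mult.assoc)
  also have "\<dots> = (\<Sum>m<Suc L + n. of_real ((seq_diff ^^ n) (seq_diff c) m) * \<omega> ^ m)"
    by (rule Suc.IH) (use Suc.prems in \<open>auto simp: seq_diff_def\<close>)
  finally show ?case by (simp add: funpow_swap1)
qed

lemma funpow_seq_diff_sample:
  assumes "0 < K" "\<And>x. x \<le> 0 \<Longrightarrow> f x = 0"
  shows "(seq_diff ^^ n) (\<lambda>m. f (real m / real K)) m = (shift_diff (1 / real K) ^^ n) f (real m / real K)"
proof (induction n arbitrary: m)
  case 0 then show ?case by simp
next
  case (Suc n)
  show ?case
  proof (cases m)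
    case 0
    have "(shift_diff (1 / real K) ^^ n) f x = 0" if "x \<le> 0" for x
      by (rule funpow_shift_diff_eq_0_left) (use assms that in auto)
    then show ?thesis using 0 by (simp only: funpow_shift_diff_Suc) (simp add: seq_diff_def)
  next
    case (Suc m')
    have "real m / real K - 1 / real K = real m' / real K" using Suc assms(1) by (simp add: field_simps)
    then show ?thesis using Suc.IH Suc by (simp only: funpow_shift_diff_Suc) (simp add: seq_diff_def)
  qed
qed

lemma norm_sub_1_power_mult_sample_sum_le:
  fixes \<omega> :: complex
  assumes chi: "Cc_inf_01 chi" and K: "K \<ge> 1" and w: "cmod \<omega> = 1"
  shows "cmod (\<omega> - 1) ^ n * cmod (\<Sum>m<K. of_real (chi (real m / real K)) * \<omega> ^ m)
     \<le> real (K + n) * ((1 / real K) ^ n * deriv_sup chi n)"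
proof -
  define c where "c = (\<lambda>m. chi (real m / real K))"
  have c0: "c 0 = 0" and cK: "\<And>m. K \<le> m \<Longrightarrow> c m = 0"
    unfolding c_def using Cc_inf_01_eq_0_outside[OF chi] K by simp_all
  have sm: "smooth_real chi" using chi unfolding Cc_inf_01_def by simp
  have "cmod (\<omega> - 1) ^ n * cmod (\<Sum>m<K. of_real (c m) * \<omega> ^ m)
      = cmod (\<Sum>m<K + n. of_real ((seq_diff ^^ n) c m) * \<omega> ^ m)"
    by (simp add: norm_mult norm_power summation_by_parts[of c K, OF c0 cK, symmetric])
  also have "\<dots> \<le> (\<Sum>m<K + n. cmod (of_real ((seq_diff ^^ n) c m) * \<omega> ^ m))" by (rule norm_sum)
  also have "\<dots> \<le> (\<Sum>m<K + n. (1 / real K) ^ n * deriv_sup chi n)"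
  proof (rule sum_mono)
    fix m
    have "cmod (of_real ((seq_diff ^^ n) c m) * \<omega> ^ m) = \<bar>(shift_diff (1 / real K) ^^ n) chi (real m / real K)\<bar>"
      unfolding c_def using w K funpow_seq_diff_sample[of K chi n m] Cc_inf_01_eq_0_outside[OF chi]
      by (simp add: norm_mult norm_power)
    also have "\<dots> \<le> (1 / real K) ^ n * deriv_sup chi n"
      by (rule abs_funpow_shift_diff_le[OF _ sm abs_higher_deriv_le_deriv_sup[OF chi]]) simp
    finally show "cmod (of_real ((seq_diff ^^ n) c m) * \<omega> ^ m) \<le> (1 / real K) ^ n * deriv_sup chi n" .
  qed
  finally show ?thesis unfolding c_def by simp
qed

lemma sin_ge_third: fixes x :: real assumes "0 \<le> x" "x \<le> 2" shows "x / 3 \<le> sin x"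
proof -
  have "\<bar>sin x - (\<Sum>m<3. sin_coeff m * x ^ m)\<bar> \<le> inverse (fact 3) * \<bar>x\<bar> ^ 3"
    by (rule Maclaurin_sin_bound)
  moreover have "(\<Sum>m<3. sin_coeff m * x ^ m) = x" "(fact 3 :: real) = 6"
    by (simp_all add: numeral_3_eq_3 sin_coeff_def)
  ultimately have "\<bar>sin x - x\<bar> \<le> x ^ 3 / 6" using assms by simp
  then have "x - x ^ 3 / 6 \<le> sin x" by linarith
  moreover have "x * x * x \<le> 4 * x"
    using mult_mono[of x 2 x 2] assms by (intro mult_right_mono) auto
  ultimately show ?thesis by (simp add: power3_eq_cube)
qed

lemma circ_dist_0: "circ_dist t 0 = min \<bar>t\<bar> (1 - \<bar>t\<bar>)"
  by (simp add: circ_dist_def)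

lemma circ_dist_0_le_2_abs_sin_pi:
  assumes "\<bar>t\<bar> \<le> 1" shows "circ_dist t 0 \<le> 2 * \<bar>sin (pi * t)\<bar>"
proof -
  have lin: "s \<le> 2 * sin (pi * s)" if s: "0 \<le> s" "s \<le> 1 / 2" for s
  proof -
    have "pi * s \<le> 4 * (1 / 2)" using s pi_less_4 by (intro mult_mono) auto
    then have "pi * s / 3 \<le> sin (pi * s)" using s by (intro sin_ge_third) auto
    moreover have "2 * s \<le> pi * s" using s pi_ge_two by (intro mult_right_mono) auto
    ultimately show ?thesis using s by linarith
  qed
  have pos: "circ_dist s 0 \<le> 2 * sin (pi * s)" if s: "0 \<le> s" "s \<le> 1" for s
  proof (cases "s \<le> 1 / 2")
    case True then show ?thesis using lin[of s] s by (simp add: circ_dist_0)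
  next
    case False
    have "sin (pi * s) = sin (pi * (1 - s))" by (simp add: right_diff_distrib sin_pi_minus)
    then show ?thesis using lin[of "1 - s"] s False by (simp add: circ_dist_0)
  qed
  show ?thesis
  proof (cases "t \<ge> 0")
    case True then show ?thesis using pos[of t] assms by auto
  next
    case False
    then show ?thesis using pos[of "- t"] assms by (simp add: circ_dist_0)
  qed
qed

lemma circ_dist_0_le_norm_exp_sub_1:
  assumes "\<bar>t\<bar> \<le> 1" shows "circ_dist t 0 \<le> cmod (exp (\<i> * of_real (2 * pi * t)) - 1)"
  using dist_exp_i_1[of "2 * pi * t"] circ_dist_0_le_2_abs_sin_pi[OF assms] by simp

definition inv_sq_decay :: "real \<Rightarrow> real" where
  "inv_sq_decay x = 1 / (1 + \<bar>x\<bar>)\<^sup>2"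

lemma inv_sq_decay_nonneg: "0 \<le> inv_sq_decay x"
  unfolding inv_sq_decay_def by simp

lemma inv_sq_decay_minus: "inv_sq_decay (- x) = inv_sq_decay x"
  unfolding inv_sq_decay_def by simp

lemma inv_sq_le_telescope:
  fixes x :: real
  shows "1 / (1 + \<bar>x\<bar>)\<^sup>2 \<le> 2 * ((x + 1) / (1 + \<bar>x + 1\<bar>) - x / (1 + \<bar>x\<bar>))"
proof (cases "x \<ge> 0")
  case True
  have "(x + 1) / (2 + x) - x / (1 + x) = 1 / ((x + 1) * (x + 2))"
    using True by (simp add: field_simps)
  moreover have "1 / ((x + 1) * (x + 1)) \<le> 2 / ((x + 1) * (x + 2))"
    using True by (simp add: divide_simps)
  ultimately show ?thesis using True by (simp add: power2_eq_square add_ac)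
next
  case neg: False
  show ?thesis
  proof (cases "x \<le> -1")
    case True
    have "(x + 1) / (1 + \<bar>x + 1\<bar>) - x / (1 + \<bar>x\<bar>) = 1 / (x * (x - 1))"
      using True by (simp add: field_simps)
    moreover have pos: "0 < x * (x - 1)" using True by (intro mult_neg_neg) auto
    moreover have "x * (x - 1) \<le> 2 * ((1 - x) * (1 - x))"
      using True by (simp add: algebra_simps) (smt (verit) zero_le_square)
    then have "1 / ((1 - x) * (1 - x)) \<le> 2 / (x * (x - 1))"
      using pos by (simp add: divide_simps)
    ultimately show ?thesis using True by (simp add: power2_eq_square)
  next
    case False
    have halves: "(x + 1) / 2 \<le> (x + 1) / (2 + x)" "- x / 2 \<le> - x / (1 - x)"
      using neg False by (intro divide_left_mono; simp)+
    have "1 / (1 + \<bar>x\<bar>)\<^sup>2 \<le> 1" by (simp add: power_le_one_iff)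
    also have "1 \<le> 2 * ((x + 1) / (2 + x) - x / (1 - x))"
      using halves by (simp add: field_simps)
    also have "\<dots> = 2 * ((x + 1) / (1 + \<bar>x + 1\<bar>) - x / (1 + \<bar>x\<bar>))"
      using neg False by (simp add: add_ac)
    finally show ?thesis .
  qed
qed

lemma sum_inv_sq_decay_shift_le_4: "(\<Sum>t<K. inv_sq_decay (real t + g)) \<le> 4"
proof -
  define \<phi> where "\<phi> = (\<lambda>n::nat. (real n + g) / (1 + \<bar>real n + g\<bar>))"
  have "(\<Sum>t<K. inv_sq_decay (real t + g)) \<le> (\<Sum>t<K. 2 * (\<phi> (Suc t) - \<phi> t))"
    by (rule sum_mono) (use inv_sq_le_telescope[of "real _ + g"] in \<open>simp add: inv_sq_decay_def \<phi>_def add_ac\<close>)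
  also have "\<dots> = 2 * (\<Sum>t<K. \<phi> (Suc t) - \<phi> t)" by (rule sum_distrib_left[symmetric])
  also have "\<dots> = 2 * (\<phi> K - \<phi> 0)" by (simp only: sum_lessThan_telescope)
  also have "\<dots> \<le> 4"
  proof -
    have "\<bar>\<phi> n\<bar> \<le> 1" for n
      unfolding \<phi>_def by (simp add: abs_div divide_le_eq_1 add_pos_nonneg)
    then show ?thesis using abs_le_iff by (smt (verit))
  qed
  finally show ?thesis .
qed

section \<open>The decay profile of \<open>\<chi>\<close>\<close>

definition decay_profile :: "(real \<Rightarrow> real) \<Rightarrow> real \<Rightarrow> real" where
  "decay_profile chi y = Inf (insert 1 (range (\<lambda>n. real (n + 1) * deriv_sup chi n / y ^ n)))"

lemma decay_profile_nonneg: "Cc_inf_01 chi \<Longrightarrow> 0 < y \<Longrightarrow> 0 \<le> decay_profile chi y"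
  unfolding decay_profile_def using deriv_sup_nonneg by (intro cInf_greatest) auto

lemma decay_profile_le:
  assumes "Cc_inf_01 chi" "0 < y"
  shows decay_profile_le_1: "decay_profile chi y \<le> 1"
    and decay_profile_le_deriv_sup: "decay_profile chi y \<le> real (n + 1) * deriv_sup chi n / y ^ n"
proof -
  have "bdd_below (insert 1 (range (\<lambda>n. real (n + 1) * deriv_sup chi n / y ^ n)))"
    using deriv_sup_nonneg[OF assms(1)] assms(2) by (intro bdd_belowI[of _ 0]) auto
  then show "decay_profile chi y \<le> 1" "decay_profile chi y \<le> real (n + 1) * deriv_sup chi n / y ^ n"
    unfolding decay_profile_def by (auto intro: cInf_lower)
qed

lemma decay_profile_greatest:
  "v \<le> 1 \<Longrightarrow> (\<And>n. v \<le> real (n + 1) * deriv_sup chi n / y ^ n) \<Longrightarrow> v \<le> decay_profile chi y"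
  unfolding decay_profile_def by (intro cInf_greatest) auto

lemma decay_profile_antimono:
  assumes chi: "Cc_inf_01 chi" and "0 < y1" "y1 \<le> y2"
  shows "decay_profile chi y2 \<le> decay_profile chi y1"
proof (rule decay_profile_greatest)
  have y2: "0 < y2" using assms by simp
  show "decay_profile chi y2 \<le> 1" by (rule decay_profile_le_1[OF chi y2])
  fix n
  have "decay_profile chi y2 \<le> real (n + 1) * deriv_sup chi n / y2 ^ n"
    by (rule decay_profile_le_deriv_sup[OF chi y2])
  also have "\<dots> \<le> real (n + 1) * deriv_sup chi n / y1 ^ n"
    using assms deriv_sup_nonneg[OF chi] by (intro divide_left_mono power_mono) auto
  finally show "decay_profile chi y2 \<le> real (n + 1) * deriv_sup chi n / y1 ^ n" .
qed

lemma norm_sample_exp_sum_le: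
  assumes chi: "Cc_inf_01 chi" and range: "\<And>x. 0 \<le> chi x \<and> chi x \<le> 1"
    and K: "K \<ge> 1" and t: "\<bar>t\<bar> \<le> 1" and y: "0 < real K * circ_dist t 0"
  shows "cmod (\<Sum>m<K. of_real (chi (real m / real K)) * exp (\<i> * of_real (2 * pi * t)) ^ m)
     \<le> real K * decay_profile chi (real K * circ_dist t 0)"
proof -
  define y where "y = real K * circ_dist t 0"
  define \<omega> where "\<omega> = exp (\<i> * of_real (2 * pi * t))"
  define S where "S = cmod (\<Sum>m<K. of_real (chi (real m / real K)) * \<omega> ^ m)"
  have w: "cmod \<omega> = 1" unfolding \<omega>_def by (simp add: norm_exp_i_times)
  have Kpos: "0 < real K" using K by simp
  have dpos: "0 < circ_dist t 0" using y Kpos by (simp add: zero_less_mult_iff)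
  have S0: "0 \<le> S" unfolding S_def by simp
  have "S \<le> (\<Sum>m<K. cmod (of_real (chi (real m / real K)) * \<omega> ^ m))" unfolding S_def by (rule norm_sum)
  also have "\<dots> \<le> (\<Sum>m<K. 1)"
    using range w by (intro sum_mono) (simp add: norm_mult norm_power)
  finally have S1: "S / real K \<le> 1" using Kpos by simp
  have Sn: "S / real K \<le> real (n + 1) * deriv_sup chi n / y ^ n" for n
  proof -
    have "circ_dist t 0 ^ n * S \<le> cmod (\<omega> - 1) ^ n * S"
      using circ_dist_0_le_norm_exp_sub_1[OF t] dpos S0 unfolding \<omega>_def
      by (intro mult_right_mono power_mono) auto
    also have "\<dots> \<le> real (K + n) * ((1 / real K) ^ n * deriv_sup chi n)"
      unfolding S_def using norm_sub_1_power_mult_sample_sum_le[OF chi K w] .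
    also have "\<dots> \<le> real K * real (n + 1) * ((1 / real K) ^ n * deriv_sup chi n)"
    proof (rule mult_right_mono)
      have "K + n \<le> K * (n + 1)" using K by (simp add: algebra_simps)
      then show "real (K + n) \<le> real K * real (n + 1)" by (metis of_nat_mono of_nat_mult)
    qed (simp add: deriv_sup_nonneg[OF chi])
    finally have "y ^ n * S \<le> real K ^ n * (real K * real (n + 1) * ((1 / real K) ^ n * deriv_sup chi n))"
      unfolding y_def by (simp add: power_mult_distrib mult.assoc mult_left_mono)
    also have "\<dots> = real K * (real (n + 1) * deriv_sup chi n)"
      using Kpos by (simp add: power_one_over field_simps)
    finally show ?thesis
      using y Kpos unfolding y_def[symmetric] by (simp add: field_simps)
  qed
  have "S / real K \<le> decay_profile chi y" by (rule decay_profile_greatest[OF S1 Sn])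
  then show ?thesis unfolding S_def \<omega>_def y_def using Kpos by (simp add: field_simps)
qed

definition quartic_const :: "(real \<Rightarrow> real) \<Rightarrow> real" where
  "quartic_const chi = 4 * sqrt (1 + 5 * deriv_sup chi 4)"

lemma quartic_const_pos: "Cc_inf_01 chi \<Longrightarrow> 0 < quartic_const chi"
  unfolding quartic_const_def using deriv_sup_nonneg[of chi 4] by simp

lemma decay_profile_le_quartic:
  assumes chi: "Cc_inf_01 chi" and y: "0 < y"
  shows "decay_profile chi y \<le> (quartic_const chi)\<^sup>2 / (1 + y) ^ 4"
proof -
  have B: "0 \<le> deriv_sup chi 4" by (rule deriv_sup_nonneg[OF chi])
  have cq: "(quartic_const chi)\<^sup>2 = 16 * (1 + 5 * deriv_sup chi 4)"
    unfolding quartic_const_def using B by (simp add: power_mult_distrib)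
  show ?thesis
  proof (cases "y \<le> 1")
    case True
    have "(1 + y) ^ 4 \<le> 2 ^ 4" using True y by (intro power_mono) auto
    then have "1 \<le> 16 * (1 + 5 * deriv_sup chi 4) / (1 + y) ^ 4"
      using y B by (simp add: divide_simps)
    then show ?thesis using decay_profile_le_1[OF chi y] cq by simp
  next
    case False
    have "decay_profile chi y \<le> 5 * deriv_sup chi 4 / y ^ 4"
      using decay_profile_le_deriv_sup[OF chi y, of 4] by simp
    also have "\<dots> \<le> 16 * (5 * deriv_sup chi 4) / (1 + y) ^ 4"
    proof -
      have "(1 + y) ^ 4 \<le> (2 * y) ^ 4" using False y by (intro power_mono) auto
      then have "(1 + y) ^ 4 \<le> 16 * y ^ 4" by (simp add: power_mult_distrib)
      then show ?thesis using B y by (simp add: divide_simps mult_left_mono)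
        (metis mult.commute mult_left_mono mult.assoc)
    qed
    also have "\<dots> \<le> 16 * (1 + 5 * deriv_sup chi 4) / (1 + y) ^ 4"
      using B y by (intro divide_right_mono) auto
    finally show ?thesis using cq by simp
  qed
qed

lemma sqrt_decay_profile_le:
  assumes chi: "Cc_inf_01 chi" and y: "0 < y"
  shows "sqrt (decay_profile chi y) \<le> quartic_const chi / (1 + y)\<^sup>2"
proof -
  have "sqrt (decay_profile chi y) \<le> sqrt ((quartic_const chi / (1 + y)\<^sup>2)\<^sup>2)"
    using decay_profile_le_quartic[OF chi y]
    by (intro real_sqrt_le_mono) (simp add: power_divide power_mult[symmetric])
  then show ?thesis using y quartic_const_pos[OF chi] by simp
qed

text \<open>The function \<open>\<tilde>g\<^sub>\<chi>\<close> of the statement; the factor \<open>12\<close> and the constant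
  \<open>quartic_const\<close> come from the Schur test in \<open>op_bound_far_block\<close>.\<close>
definition g_tilde :: "(real \<Rightarrow> real) \<Rightarrow> real \<Rightarrow> real" where
  "g_tilde chi x = 12 * quartic_const chi * sqrt (decay_profile chi (x / 2))"

lemma g_tilde_nonneg: "Cc_inf_01 chi \<Longrightarrow> 0 < x \<Longrightarrow> 0 \<le> g_tilde chi x"
  unfolding g_tilde_def using quartic_const_pos[of chi] decay_profile_nonneg[of chi "x / 2"] by simp

lemma g_tilde_poly_decay:
  assumes chi: "Cc_inf_01 chi"
  shows "\<exists>C>0. \<forall>x>0. g_tilde chi x \<le> C * x powr (- real n)"
proof -
  define C0 where "C0 = 12 * quartic_const chi * sqrt (real (2 * n + 1) * deriv_sup chi (2 * n)) * 2 ^ n"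
  have C0: "0 \<le> C0" unfolding C0_def using quartic_const_pos[OF chi] deriv_sup_nonneg[OF chi] by simp
  have "g_tilde chi x \<le> (C0 + 1) * x powr (- real n)" if x: "0 < x" for x
  proof -
    have "sqrt (decay_profile chi (x / 2))
        \<le> sqrt (real (2 * n + 1) * deriv_sup chi (2 * n) / (x / 2) ^ (2 * n))"
      using x by (intro real_sqrt_le_mono decay_profile_le_deriv_sup[OF chi]) simp
    also have "\<dots> = sqrt (real (2 * n + 1) * deriv_sup chi (2 * n)) / (x / 2) ^ n"
    proof -
      have "(x / 2) ^ (2 * n) = ((x / 2) ^ n)\<^sup>2" by (metis power_mult mult.commute)
      then show ?thesis unfolding real_sqrt_divide using x by simp
    qed
    finally have "g_tilde chi x
        \<le> 12 * quartic_const chi * (sqrt (real (2 * n + 1) * deriv_sup chi (2 * n)) / (x / 2) ^ n)"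
      unfolding g_tilde_def using quartic_const_pos[OF chi] by (intro mult_left_mono) auto
    also have "\<dots> = C0 * x powr (- real n)"
      unfolding C0_def using x by (simp add: powr_minus powr_realpow power_divide field_simps)
    also have "\<dots> \<le> (C0 + 1) * x powr (- real n)" by (simp add: mult_right_mono)
    finally show ?thesis .
  qed
  moreover have "0 < C0 + 1" using C0 by simp
  ultimately show ?thesis by blast
qed

lemma fact_powr_le_powr_power: "0 \<le> s \<Longrightarrow> (fact n :: real) powr s \<le> (real n powr s) ^ n"
proof (cases "n = 0")
  case False
  assume s: "0 \<le> s"
  have "(fact n :: real) powr s \<le> (real n ^ n) powr s"
    using fact_le_power[of n] s by (intro powr_mono2) auto
  also have "\<dots> = (real n powr s) ^ n"
    using False by (simp add: powr_realpow[symmetric] powr_powr powr_power mult.commute)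
  finally show ?thesis .
qed simp

lemma deriv_sup_gevrey_le:
  assumes chi: "Cc_inf_01 chi" and s: "1 < s" and gev: "gevrey_c01 s chi"
  obtains C where "1 \<le> C" "\<And>n. deriv_sup chi n \<le> C ^ (n + 1) * (real n powr s) ^ n"
proof -
  obtain C0 where C0: "\<forall>n::nat. \<forall>x\<in>{0..1::real}. \<bar>(deriv ^^ n) chi x\<bar> \<le> C0 ^ (n + 1) * (fact n) powr s"
    using gev unfolding gevrey_c01_def by (meson compact_Icc)
  define C where "C = max 1 \<bar>C0\<bar>"
  have C: "1 \<le> C" unfolding C_def by simp
  have sm: "smooth_real chi" and sub: "fsupp chi \<subseteq> {0<..<1}" using chi unfolding Cc_inf_01_def by auto
  have "deriv_sup chi n \<le> C ^ (n + 1) * (real n powr s) ^ n" for n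
  proof -
    have "\<bar>(deriv ^^ n) chi x\<bar> \<le> C ^ (n + 1) * (fact n) powr s" for x
    proof (cases "x \<in> {0..1}")
      case True
      have "C0 ^ (n + 1) \<le> \<bar>C0\<bar> ^ (n + 1)" by (metis abs_ge_self power_abs)
      also have "\<dots> \<le> C ^ (n + 1)" unfolding C_def by (intro power_mono) auto
      finally have "C0 ^ (n + 1) * (fact n) powr s \<le> C ^ (n + 1) * (fact n) powr s"
        by (rule mult_right_mono) simp
      then show ?thesis using C0 True by (meson order_trans)
    next
      case False
      then have "x \<notin> fsupp chi" using sub by auto
      then show ?thesis using smooth_real_higher_deriv_eq_0_outside[OF sm] C by simp
    qed
    then have "deriv_sup chi n \<le> C ^ (n + 1) * (fact n) powr s" by (rule deriv_sup_le)
    also have "\<dots> \<le> C ^ (n + 1) * (real n powr s) ^ n"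
      using fact_powr_le_powr_power[of s n] s C by (intro mult_left_mono) auto
    finally show ?thesis .
  qed
  then show thesis using C that by blast
qed

lemma decay_profile_gevrey_le:
  assumes chi: "Cc_inf_01 chi" and s: "1 < s" and C: "1 \<le> C"
    and bound: "\<And>n. deriv_sup chi n \<le> C ^ (n + 1) * (real n powr s) ^ n"
    and y: "0 < y"
  shows "decay_profile chi y \<le> C * exp 1 * exp (- ((y / (2 * exp 1 * C)) powr (1 / s)))"
proof -
  define E where "E = 2 * exp 1 * C"
  have E: "0 < E" unfolding E_def using C by simp
  define t where "t = (y / E) powr (1 / s)"
  define n where "n = nat \<lfloor>t\<rfloor>"
  have "0 \<le> t" unfolding t_def by simp
  then have nt: "real n \<le> t" "t < real n + 1" unfolding n_def by linarith+
  have "real n powr s \<le> t powr s" using nt s by (intro powr_mono2) auto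
  also have "\<dots> = y / E" unfolding t_def using s y E by (simp add: powr_powr)
  finally have ns: "real n powr s \<le> y / E" .
  define b where "b = 2 * C * real n powr s / y"
  have b0: "0 \<le> b" unfolding b_def using C y by simp
  have "b \<le> 2 * C * (y / E) / y" unfolding b_def using ns C y
    by (intro divide_right_mono mult_left_mono) auto
  also have "\<dots> = exp (- 1)" unfolding E_def using y C by (simp add: exp_minus field_simps)
  finally have b1: "b \<le> exp (- 1)" .
  have two_pow: "real (n + 1) \<le> 2 ^ n" by (induction n) (auto simp: one_le_power)
  have "decay_profile chi y \<le> real (n + 1) * deriv_sup chi n / y ^ n"
    by (rule decay_profile_le_deriv_sup[OF chi y])
  also have "\<dots> \<le> 2 ^ n * (C ^ (n + 1) * (real n powr s) ^ n) / y ^ n"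
    using two_pow bound[of n] deriv_sup_nonneg[OF chi] y
    by (intro divide_right_mono mult_mono) auto
  also have "\<dots> = C * b ^ n" unfolding b_def using y by (simp add: power_mult_distrib power_divide)
  also have "\<dots> \<le> C * exp (- 1) ^ n" using b0 b1 C by (intro mult_left_mono power_mono) auto
  also have "\<dots> = C * exp (- real n)" by (simp add: exp_of_nat_mult[symmetric])
  also have "\<dots> \<le> C * exp (1 - t)" using nt C by (intro mult_left_mono) auto
  also have "\<dots> = C * exp 1 * exp (- t)" by (simp add: exp_diff exp_minus field_simps)
  finally show ?thesis unfolding t_def E_def .
qed

lemma g_tilde_gevrey_decay:
  assumes chi: "Cc_inf_01 chi" and s: "1 < s" and gev: "gevrey_c01 s chi"
  shows "\<exists>C>0. \<exists>c>0. \<forall>x>0. g_tilde chi x \<le> C * exp (- c * x powr (1 / s))"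
proof -
  obtain C1 where C1: "1 \<le> C1" and bound: "\<And>n. deriv_sup chi n \<le> C1 ^ (n + 1) * (real n powr s) ^ n"
    using deriv_sup_gevrey_le[OF chi s gev] by blast
  define E where "E = 2 * exp 1 * C1"
  define c where "c = 1 / (2 * (2 * E) powr (1 / s))"
  define C where "C = 12 * quartic_const chi * sqrt (C1 * exp 1) + 1"
  have c: "0 < c" unfolding c_def E_def using C1 by simp
  have C: "0 < C" unfolding C_def using quartic_const_pos[OF chi] C1 by (simp add: add_nonneg_pos)
  have "g_tilde chi x \<le> C * exp (- c * x powr (1 / s))" if x: "0 < x" for x
  proof -
    have sqrt_exp: "sqrt (exp (- u)) = exp (- u / 2)" for u :: real
    proof -
      have "exp (- u) = (exp (- u / 2))\<^sup>2" by (simp add: power2_eq_square exp_add[symmetric])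
      then show ?thesis by simp
    qed
    have "sqrt (decay_profile chi (x / 2)) \<le> sqrt (C1 * exp 1 * exp (- ((x / 2 / E) powr (1 / s))))"
      using x unfolding E_def by (intro real_sqrt_le_mono decay_profile_gevrey_le[OF chi s C1 bound]) simp
    also have "\<dots> = sqrt (C1 * exp 1) * exp (- ((x / 2 / E) powr (1 / s)) / 2)"
      using C1 by (simp add: real_sqrt_mult sqrt_exp del: real_sqrt_mult_self)
    also have "- ((x / 2 / E) powr (1 / s)) / 2 = - c * x powr (1 / s)"
      unfolding c_def by (simp add: powr_divide field_simps)
    finally have "g_tilde chi x \<le> 12 * quartic_const chi * (sqrt (C1 * exp 1) * exp (- c * x powr (1 / s)))"
      unfolding g_tilde_def using quartic_const_pos[OF chi] by (intro mult_left_mono) auto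
    also have "\<dots> \<le> C * exp (- c * x powr (1 / s))" unfolding C_def by (simp add: algebra_simps)
    finally show ?thesis .
  qed
  then show ?thesis using c C by blast
qed

lemma dim_mat_adjoint [simp]:
  "dim_row (mat_adjoint A) = dim_col A" "dim_col (mat_adjoint A) = dim_row A"
  unfolding mat_adjoint_def by simp_all

lemma mat_adjoint_carrier: "A \<in> carrier_mat n m \<Longrightarrow> mat_adjoint A \<in> carrier_mat m n"
  unfolding carrier_mat_def by simp

lemma index_mat_adjoint [simp]:
  fixes A :: "complex mat"
  shows "i < dim_col A \<Longrightarrow> j < dim_row A \<Longrightarrow> mat_adjoint A $$ (i, j) = cnj (A $$ (j, i))"
  unfolding mat_adjoint_def by (simp add: mat_of_rows_index)

lemma mat_adjoint_adjoint: fixes A :: "complex mat" shows "mat_adjoint (mat_adjoint A) = A"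
  by (rule eq_matI) auto

definition e2pi :: "real \<Rightarrow> complex" where
  "e2pi x = exp (2 * pi * \<i> * of_real x)"

lemma e2pi_add: "e2pi (x + y) = e2pi x * e2pi y"
  unfolding e2pi_def by (simp add: exp_add[symmetric] distrib_left)

lemma e2pi_of_int: "e2pi (of_int k) = 1"
proof -
  have "e2pi (of_int k) = exp ((2 * of_int k * pi) * \<i>)" unfolding e2pi_def by (simp add: algebra_simps)
  also have "\<dots> = 1" by (rule exp_integer_2pi) simp
  finally show ?thesis .
qed

lemma e2pi_of_nat: "e2pi (real k) = 1"
  using e2pi_of_int[of "int k"] by simp

lemma cnj_e2pi: "cnj (e2pi x) = e2pi (- x)"
  unfolding e2pi_def by (simp add: exp_cnj)

lemma e2pi_eq_exp: "e2pi x = exp (\<i> * of_real (2 * pi * x))"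
  unfolding e2pi_def by (simp add: algebra_simps)

lemma norm_e2pi [simp]: "cmod (e2pi x) = 1"
  unfolding e2pi_eq_exp by (simp only: norm_exp_i_times)

lemma e2pi_power: "e2pi x ^ m = e2pi (real m * x)"
  unfolding e2pi_def by (simp add: exp_of_nat_mult[symmetric] algebra_simps)

lemma e2pi_eq_1_imp_int: "e2pi x = 1 \<Longrightarrow> \<exists>n::int. x = of_int n"
proof -
  assume "e2pi x = 1"
  then obtain n :: int where "2 * pi * x = of_int (2 * n) * pi"
    unfolding e2pi_def by (auto simp: exp_eq_1)
  then show ?thesis by auto
qed

lemma sum_e2pi_roots:
  assumes M: "0 < M"
  shows "(\<Sum>a<M. e2pi (real a * of_int k / real M)) = (if int M dvd k then of_nat M else 0)"
proof -
  define \<omega> where "\<omega> = e2pi (of_int k / real M)"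
  have e: "e2pi (real a * of_int k / real M) = \<omega> ^ a" for a unfolding \<omega>_def e2pi_power by simp
  show ?thesis
  proof (cases "int M dvd k")
    case True
    then obtain q where q: "k = int M * q" by blast
    have "\<omega> = 1" unfolding \<omega>_def q using M e2pi_of_int[of q] by simp
    then show ?thesis using True e by simp
  next
    case False
    have "\<omega> \<noteq> 1"
    proof
      assume "\<omega> = 1"
      then obtain n :: int where "of_int k / real M = of_int n"
        unfolding \<omega>_def using e2pi_eq_1_imp_int by blast
      then have "k = int M * n" using M by (simp add: field_simps) (metis of_int_eq_iff of_int_mult of_int_of_nat_eq)
      then show False using False by simp
    qed
    moreover have "\<omega> ^ M = 1" unfolding \<omega>_def e2pi_power using M e2pi_of_int[of k] by simp
    ultimately show ?thesis using False e by (simp add: sum_gp_strict)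
  qed
qed

lemma int_dvd_diff_iff_eq:
  assumes "j < N" "k < N" shows "int N dvd (int j - int k) \<longleftrightarrow> j = k"
proof
  assume d: "int N dvd (int j - int k)"
  show "j = k"
  proof (rule ccontr)
    assume "j \<noteq> k"
    then have "int N \<le> \<bar>int j - int k\<bar>" using dvd_imp_le_int[OF _ d] by simp
    then show False using assms by linarith
  qed
qed simp

lemma fourier_carrier: "fourier N \<in> carrier_mat N N"
  unfolding fourier_def by simp

lemma dim_fourier [simp]: "dim_row (fourier N) = N" "dim_col (fourier N) = N"
  unfolding fourier_def by simp_all

lemma fourier_adjoint_carrier: "mat_adjoint (fourier N) \<in> carrier_mat N N"
  by (rule mat_adjoint_carrier[OF fourier_carrier])

lemma index_fourier: "j < N \<Longrightarrow> m < N \<Longrightarrow>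
  fourier N $$ (j, m) = e2pi (- (real j * real m / real N)) / of_real (sqrt (real N))"
  unfolding fourier_def e2pi_def by (simp add: field_simps)

lemma fourier_adjoint_mult:
  assumes N: "0 < N"
  shows "mat_adjoint (fourier N) * fourier N = 1\<^sub>m N"
proof (rule eq_matI)
  fix j k assume "j < dim_row (1\<^sub>m N :: complex mat)" "k < dim_col (1\<^sub>m N :: complex mat)"
  then have j: "j < N" and k: "k < N" by auto
  have sqrtN: "of_real (sqrt (real N)) * of_real (sqrt (real N)) = (of_nat N :: complex)"
    by (metis of_real_mult of_real_of_nat_eq of_nat_0_le_iff real_sqrt_mult_self abs_of_nonneg)
  have entry: "cnj (fourier N $$ (m, j)) * fourier N $$ (m, k)
      = e2pi (real m * of_int (int j - int k) / real N) / of_nat N" if m: "m < N" for m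
    using m j k unfolding sqrtN[symmetric]
    by (simp add: index_fourier cnj_e2pi e2pi_add[symmetric] algebra_simps diff_divide_distrib)
  have "(mat_adjoint (fourier N) * fourier N) $$ (j, k) =
      (\<Sum>m<N. cnj (fourier N $$ (m, j)) * fourier N $$ (m, k))"
    using j k by (simp add: scalar_prod_def atLeast0LessThan)
  also have "\<dots> = (\<Sum>m<N. e2pi (real m * of_int (int j - int k) / real N)) / of_nat N"
    by (simp add: entry sum_divide_distrib)
  also have "\<dots> = 1\<^sub>m N $$ (j, k)"
    using sum_e2pi_roots[OF N, of "int j - int k"] int_dvd_diff_iff_eq[OF j k] j k N
    by (simp del: of_int_diff)
  finally show "(mat_adjoint (fourier N) * fourier N) $$ (j, k) = 1\<^sub>m N $$ (j, k)" .
qed auto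

lemma fourier_mult_adjoint: "0 < N \<Longrightarrow> fourier N * mat_adjoint (fourier N) = 1\<^sub>m N"
  using mat_mult_left_right_inverse[OF fourier_adjoint_carrier fourier_carrier fourier_adjoint_mult] .

definition sq_l2norm :: "complex vec \<Rightarrow> real" where
  "sq_l2norm u = (\<Sum>i<dim_vec u. (cmod (u $ i))\<^sup>2)"

lemma l2norm_eq_sqrt: "l2norm u = sqrt (sq_l2norm u)"
  unfolding l2norm_def sq_l2norm_def ..

lemma sq_l2norm_nonneg: "0 \<le> sq_l2norm u"
  unfolding sq_l2norm_def by (intro sum_nonneg) simp

lemma l2norm_nonneg: "0 \<le> l2norm u"
  unfolding l2norm_eq_sqrt using sq_l2norm_nonneg by simp

lemma of_real_sq_l2norm: "of_real (sq_l2norm u) = (\<Sum>i<dim_vec u. u $ i * cnj (u $ i))"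
  unfolding sq_l2norm_def of_real_sum by (intro sum.cong refl) (rule complex_norm_square)

lemma sq_l2norm_mult_mat_vec:
  assumes A: "A \<in> carrier_mat N N" and v: "v \<in> carrier_vec N"
  shows "of_real (sq_l2norm (A *\<^sub>v v)) = (\<Sum>j<N. \<Sum>k<N. v$j * cnj (v$k) * (mat_adjoint A * A) $$ (k,j))"
proof -
  have "of_real (sq_l2norm (A *\<^sub>v v)) = (\<Sum>i<N. (A *\<^sub>v v)$i * cnj ((A *\<^sub>v v)$i))"
    using A by (simp add: of_real_sq_l2norm)
  also have "\<dots> = (\<Sum>i<N. (\<Sum>j<N. A$$(i,j) * v$j) * (\<Sum>k<N. cnj (A$$(i,k)) * cnj (v$k)))"
    using A v by (intro sum.cong) (auto simp: scalar_prod_def atLeast0LessThan)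
  also have "\<dots> = (\<Sum>i<N. \<Sum>j<N. \<Sum>k<N. A$$(i,j) * v$j * (cnj (A$$(i,k)) * cnj (v$k)))"
    by (simp add: sum_product)
  also have "\<dots> = (\<Sum>j<N. \<Sum>k<N. \<Sum>i<N. A$$(i,j) * v$j * (cnj (A$$(i,k)) * cnj (v$k)))"
    by (subst sum.swap) (rule sum.cong[OF refl], rule sum.swap)
  also have "\<dots> = (\<Sum>j<N. \<Sum>k<N. v$j * cnj (v$k) * (mat_adjoint A * A) $$ (k,j))"
    using A by (intro sum.cong refl) (simp add: scalar_prod_def atLeast0LessThan sum_distrib_left algebra_simps)
  finally show ?thesis .
qed

lemma sq_l2norm_unitary:
  assumes A: "A \<in> carrier_mat N N" and U: "mat_adjoint A * A = 1\<^sub>m N" and v: "v \<in> carrier_vec N"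
  shows "sq_l2norm (A *\<^sub>v v) = sq_l2norm v"
proof -
  have "(of_real (sq_l2norm (A *\<^sub>v v)) :: complex) = (\<Sum>j<N. \<Sum>k<N. v $ j * cnj (v $ k) * (if k = j then 1 else 0))"
    unfolding sq_l2norm_mult_mat_vec[OF A v] U by (intro sum.cong refl) simp
  also have "\<dots> = of_real (sq_l2norm v)" using v by (simp add: of_real_sq_l2norm if_distrib cong: if_cong)
  finally show ?thesis by (simp only: of_real_eq_iff)
qed

lemma l2norm_unitary:
  "A \<in> carrier_mat N N \<Longrightarrow> mat_adjoint A * A = 1\<^sub>m N \<Longrightarrow> v \<in> carrier_vec N \<Longrightarrow> l2norm (A *\<^sub>v v) = l2norm v"
  unfolding l2norm_eq_sqrt by (simp add: sq_l2norm_unitary)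

lemma l2norm_eq_L2_set: "l2norm u = L2_set (\<lambda>i. cmod (u $ i)) {..<dim_vec u}"
  unfolding l2norm_def L2_set_def ..

lemma l2norm_triangle:
  assumes "x \<in> carrier_vec N" "y \<in> carrier_vec N"
  shows "l2norm (x + y) \<le> l2norm x + l2norm y"
proof -
  have "l2norm (x + y) = L2_set (\<lambda>i. cmod ((x + y)$i)) {..<N}" using assms by (simp add: l2norm_eq_L2_set)
  also have "\<dots> \<le> L2_set (\<lambda>i. cmod (x$i) + cmod (y$i)) {..<N}"
    using assms by (intro L2_set_mono) (auto simp: norm_triangle_ineq)
  also have "\<dots> \<le> L2_set (\<lambda>i. cmod (x$i)) {..<N} + L2_set (\<lambda>i. cmod (y$i)) {..<N}"
    by (rule L2_set_triangle_ineq)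
  also have "\<dots> = l2norm x + l2norm y" using assms by (simp add: l2norm_eq_L2_set)
  finally show ?thesis .
qed

lemma l2norm_smult: "l2norm (k \<cdot>\<^sub>v x) = cmod k * l2norm x"
proof -
  have "l2norm (k \<cdot>\<^sub>v x) = L2_set (\<lambda>i. cmod k * cmod (x$i)) {..<dim_vec x}"
    unfolding l2norm_eq_L2_set by (intro L2_set_cong) (auto simp: norm_mult)
  also have "\<dots> = cmod k * l2norm x" unfolding l2norm_eq_L2_set by (simp add: L2_set_right_distrib)
  finally show ?thesis .
qed

definition op_bound :: "nat \<Rightarrow> complex mat \<Rightarrow> real \<Rightarrow> bool" where
  "op_bound N A c \<longleftrightarrow> (\<forall>u\<in>carrier_vec N. l2norm (A *\<^sub>v u) \<le> c * l2norm u)"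

lemma op_norm_le: assumes "op_bound N A c" "0 \<le> c" shows "op_norm N A \<le> c"
  unfolding op_norm_def
proof (rule cSup_least)
  have "l2norm (0\<^sub>v N :: complex vec) \<le> 1" by (simp add: l2norm_def)
  then have "l2norm (A *\<^sub>v 0\<^sub>v N) \<in> {l2norm (A *\<^sub>v u) |u. u \<in> carrier_vec N \<and> l2norm u \<le> 1}"
    by (intro CollectI exI[of _ "0\<^sub>v N"]) simp
  then show "{l2norm (A *\<^sub>v u) |u. u \<in> carrier_vec N \<and> l2norm u \<le> 1} \<noteq> {}" by auto
  fix x assume "x \<in> {l2norm (A *\<^sub>v u) |u. u \<in> carrier_vec N \<and> l2norm u \<le> 1}"
  then obtain u where u: "u \<in> carrier_vec N" "l2norm u \<le> 1" "x = l2norm (A *\<^sub>v u)" by blast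
  have "x \<le> c * l2norm u" using assms(1) u unfolding op_bound_def by blast
  also have "\<dots> \<le> c * 1" using u assms(2) by (intro mult_left_mono) auto
  finally show "x \<le> c" by simp
qed

lemma op_boundI_sq:
  assumes "\<And>u. u \<in> carrier_vec N \<Longrightarrow> sq_l2norm (A *\<^sub>v u) \<le> c\<^sup>2 * sq_l2norm u" "0 \<le> c"
  shows "op_bound N A c"
  unfolding op_bound_def
proof
  fix u :: "complex vec" assume "u \<in> carrier_vec N"
  then have "l2norm (A *\<^sub>v u) \<le> sqrt (c\<^sup>2 * sq_l2norm u)"
    unfolding l2norm_eq_sqrt using assms(1) by (intro real_sqrt_le_mono)
  also have "\<dots> = c * l2norm u" unfolding l2norm_eq_sqrt using assms(2) by (simp add: real_sqrt_mult)
  finally show "l2norm (A *\<^sub>v u) \<le> c * l2norm u" .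
qed

lemma op_bound_mult:
  assumes A: "A \<in> carrier_mat N N" and B: "B \<in> carrier_mat N N"
    and "op_bound N A a" "op_bound N B b" "0 \<le> a"
  shows "op_bound N (A * B) (a * b)"
  unfolding op_bound_def
proof
  fix u :: "complex vec" assume u: "u \<in> carrier_vec N"
  have "l2norm ((A * B) *\<^sub>v u) = l2norm (A *\<^sub>v (B *\<^sub>v u))" using A B u by simp
  also have "\<dots> \<le> a * l2norm (B *\<^sub>v u)" using assms(3) B u unfolding op_bound_def by simp
  also have "\<dots> \<le> a * (b * l2norm u)" using assms(4,5) u unfolding op_bound_def by (simp add: mult_left_mono)
  finally show "l2norm ((A * B) *\<^sub>v u) \<le> a * b * l2norm u" by (simp add: mult.assoc)
qed

lemma op_bound_add:
  assumes A: "A \<in> carrier_mat N N" and B: "B \<in> carrier_mat N N"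
    and "op_bound N A a" "op_bound N B b"
  shows "op_bound N (A + B) (a + b)"
  unfolding op_bound_def
proof
  fix u :: "complex vec" assume u: "u \<in> carrier_vec N"
  have "l2norm ((A + B) *\<^sub>v u) = l2norm (A *\<^sub>v u + B *\<^sub>v u)" using A B u by (simp add: add_mult_distrib_mat_vec)
  also have "\<dots> \<le> l2norm (A *\<^sub>v u) + l2norm (B *\<^sub>v u)" using A B u by (intro l2norm_triangle[of _ N]) auto
  also have "\<dots> \<le> a * l2norm u + b * l2norm u" using assms(3,4) u unfolding op_bound_def by (simp add: add_mono)
  finally show "l2norm ((A + B) *\<^sub>v u) \<le> (a + b) * l2norm u" by (simp add: algebra_simps)
qed

lemma smult_mat_mult_vec:
  assumes "A \<in> carrier_mat N N" "u \<in> carrier_vec N"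
  shows "(k \<cdot>\<^sub>m A) *\<^sub>v u = k \<cdot>\<^sub>v (A *\<^sub>v u)"
  using assms by (intro eq_vecI) (auto simp: scalar_prod_def sum_distrib_left algebra_simps)

lemma op_bound_smult:
  assumes A: "A \<in> carrier_mat N N" and "op_bound N A a"
  shows "op_bound N (k \<cdot>\<^sub>m A) (cmod k * a)"
  unfolding op_bound_def
proof
  fix u :: "complex vec" assume u: "u \<in> carrier_vec N"
  have "l2norm ((k \<cdot>\<^sub>m A) *\<^sub>v u) = cmod k * l2norm (A *\<^sub>v u)" using A u by (simp add: smult_mat_mult_vec l2norm_smult)
  also have "\<dots> \<le> cmod k * (a * l2norm u)" using assms(2) u unfolding op_bound_def by (simp add: mult_left_mono)
  finally show "l2norm ((k \<cdot>\<^sub>m A) *\<^sub>v u) \<le> cmod k * a * l2norm u" by (simp add: mult.assoc)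
qed

lemma op_bound_zero: "op_bound N (0\<^sub>m N N) 0"
  unfolding op_bound_def
proof
  fix u :: "complex vec" assume u: "u \<in> carrier_vec N"
  have "0\<^sub>m N N *\<^sub>v u = 0\<^sub>v N" using u by (intro eq_vecI) (auto simp: scalar_prod_def)
  then show "l2norm (0\<^sub>m N N *\<^sub>v u) \<le> 0 * l2norm u" by (simp add: l2norm_def)
qed

lemma op_bound_unitary_conj:
  assumes F: "F \<in> carrier_mat N N" and U1: "mat_adjoint F * F = 1\<^sub>m N" and U2: "F * mat_adjoint F = 1\<^sub>m N"
    and Q: "Q \<in> carrier_mat N N" and "op_bound N Q c"
  shows "op_bound N (mat_adjoint F * Q * F) c"
  unfolding op_bound_def
proof
  fix u :: "complex vec" assume u: "u \<in> carrier_vec N"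
  have Fa: "mat_adjoint F \<in> carrier_mat N N" using F by (rule mat_adjoint_carrier)
  have "(mat_adjoint F * Q * F) *\<^sub>v u = (mat_adjoint F * Q) *\<^sub>v (F *\<^sub>v u)"
    by (rule assoc_mult_mat_vec[OF mult_carrier_mat[OF Fa Q] F u])
  also have "\<dots> = mat_adjoint F *\<^sub>v (Q *\<^sub>v (F *\<^sub>v u))"
    by (rule assoc_mult_mat_vec[OF Fa Q mult_mat_vec_carrier[OF F u]])
  finally have "l2norm ((mat_adjoint F * Q * F) *\<^sub>v u) = l2norm (Q *\<^sub>v (F *\<^sub>v u))"
    using l2norm_unitary[OF Fa _, of "Q *\<^sub>v (F *\<^sub>v u)"] U2 mat_adjoint_adjoint[of F] F Q u by simp
  also have "\<dots> \<le> c * l2norm (F *\<^sub>v u)" using assms(5) F u unfolding op_bound_def by simp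
  also have "l2norm (F *\<^sub>v u) = l2norm u" using l2norm_unitary[OF F U1 u] .
  finally show "l2norm ((mat_adjoint F * Q * F) *\<^sub>v u) \<le> c * l2norm u" .
qed

lemma op_bound_fourier_adjoint: assumes N: "0 < N" shows "op_bound N (mat_adjoint (fourier N)) 1"
  unfolding op_bound_def
proof
  fix u :: "complex vec" assume u: "u \<in> carrier_vec N"
  have "l2norm (mat_adjoint (fourier N) *\<^sub>v u) = l2norm u"
    by (rule l2norm_unitary[OF fourier_adjoint_carrier]) (use fourier_mult_adjoint[OF N] mat_adjoint_adjoint u in auto)
  then show "l2norm (mat_adjoint (fourier N) *\<^sub>v u) \<le> 1 * l2norm u" by simp
qed

definition coord_proj :: "nat \<Rightarrow> nat set \<Rightarrow> complex mat" where
  "coord_proj N S = mat N N (\<lambda>(i, j). if i = j \<and> i \<in> S then 1 else 0)"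

lemma coord_proj_carrier [simp]: "coord_proj N S \<in> carrier_mat N N"
  unfolding coord_proj_def by simp

lemma dim_coord_proj [simp]: "dim_row (coord_proj N S) = N" "dim_col (coord_proj N S) = N"
  unfolding coord_proj_def by simp_all

lemma index_coord_proj:
  "i < N \<Longrightarrow> j < N \<Longrightarrow> coord_proj N S $$ (i, j) = (if i = j \<and> i \<in> S then 1 else 0)"
  unfolding coord_proj_def by simp

lemma coord_proj_mult_vec:
  assumes "u \<in> carrier_vec N" "i < N"
  shows "(coord_proj N S *\<^sub>v u) $ i = (if i \<in> S then u $ i else 0)"
proof -
  have "(coord_proj N S *\<^sub>v u) $ i = (\<Sum>j\<in>{0..<N}. (if i = j \<and> i \<in> S then 1 else 0) * u $ j)"
    using assms by (simp add: scalar_prod_def index_coord_proj)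
  also have "\<dots> = (\<Sum>j\<in>{0..<N}. if j = i then (if i \<in> S then u $ i else 0) else 0)"
    by (intro sum.cong refl) auto
  also have "\<dots> = (if i \<in> S then u $ i else 0)" using assms by simp
  finally show ?thesis .
qed

lemma sq_l2norm_coord_proj_le:
  assumes u: "u \<in> carrier_vec N"
  shows "sq_l2norm (coord_proj N S *\<^sub>v u) \<le> sq_l2norm u"
proof -
  have "sq_l2norm (coord_proj N S *\<^sub>v u) = (\<Sum>i<N. (cmod (if i \<in> S then u $ i else 0))\<^sup>2)"
    unfolding sq_l2norm_def using u
    by (intro sum.cong) (auto simp del: index_mult_mat_vec simp: coord_proj_mult_vec)
  also have "\<dots> \<le> (\<Sum>i<N. (cmod (u $ i))\<^sup>2)" by (intro sum_mono) auto
  also have "\<dots> = sq_l2norm u" using u by (simp add: sq_l2norm_def)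
  finally show ?thesis .
qed

lemma op_bound_coord_proj: "op_bound N (coord_proj N S) 1"
  by (rule op_boundI_sq) (simp_all add: sq_l2norm_coord_proj_le)

definition fourier_proj :: "nat \<Rightarrow> nat set \<Rightarrow> complex mat" where
  "fourier_proj N S = mat_adjoint (fourier N) * coord_proj N S * fourier N"

lemma fourier_proj_carrier [simp]: "fourier_proj N S \<in> carrier_mat N N"
  unfolding fourier_proj_def using fourier_carrier[of N] fourier_adjoint_carrier[of N]
  by (metis coord_proj_carrier mult_carrier_mat)

lemma dim_fourier_proj [simp]: "dim_row (fourier_proj N S) = N" "dim_col (fourier_proj N S) = N"
  using fourier_proj_carrier[of N S] unfolding carrier_mat_def by auto

lemma fourier_multiplier_fourier_proj: "fourier_multiplier N (fourier_proj N S)"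
  unfolding fourier_multiplier_def fourier_proj_def
  by (intro exI[of _ "coord_proj N S"]) (auto simp: diagonal_mat_def index_coord_proj)

lemma fourier_proj_full:
  assumes "0 < N" "{..<N} \<subseteq> S" shows "fourier_proj N S = 1\<^sub>m N"
proof -
  have "coord_proj N S = 1\<^sub>m N" using assms(2) by (intro eq_matI) (auto simp: index_coord_proj)
  then show ?thesis
    unfolding fourier_proj_def using fourier_adjoint_mult[OF assms(1)] fourier_adjoint_carrier by simp
qed

lemma one_minus_fourier_proj:
  assumes N: "0 < N" shows "1\<^sub>m N - fourier_proj N S = fourier_proj N (- S)"
proof -
  have Fa: "mat_adjoint (fourier N) \<in> carrier_mat N N" by (rule fourier_adjoint_carrier)
  have F: "fourier N \<in> carrier_mat N N" by (rule fourier_carrier)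
  have "coord_proj N S + coord_proj N (- S) = 1\<^sub>m N"
    by (rule eq_matI) (auto simp: index_coord_proj)
  then have "1\<^sub>m N = mat_adjoint (fourier N) * (coord_proj N S + coord_proj N (- S)) * fourier N"
    using fourier_adjoint_mult[OF N] Fa by simp
  also have "\<dots> = fourier_proj N S + fourier_proj N (- S)" unfolding fourier_proj_def
    using Fa F by (simp add: mult_add_distrib_mat[OF Fa coord_proj_carrier coord_proj_carrier]
        add_mult_distrib_mat[OF mult_carrier_mat[OF Fa coord_proj_carrier] mult_carrier_mat[OF Fa coord_proj_carrier] F])
  finally have decomp: "1\<^sub>m N = fourier_proj N S + fourier_proj N (- S)" .
  show ?thesis
  proof (rule eq_matI)
    fix i j assume "i < dim_row (fourier_proj N (- S))" "j < dim_col (fourier_proj N (- S))"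
    then have ij: "i < N" "j < N" using fourier_proj_carrier[of N "- S"] by auto
    have "1\<^sub>m N $$ (i, j) = fourier_proj N S $$ (i, j) + fourier_proj N (- S) $$ (i, j)"
      using ij fourier_proj_carrier[of N "- S"] fourier_proj_carrier[of N S]
      by (subst decomp) simp
    then show "(1\<^sub>m N - fourier_proj N S) $$ (i, j) = fourier_proj N (- S) $$ (i, j)"
      using ij fourier_proj_carrier[of N S] by simp
  qed (use fourier_proj_carrier[of N S] fourier_proj_carrier[of N "- S"] in auto)
qed

lemma op_bound_fourier_proj: "0 < N \<Longrightarrow> op_bound N (fourier_proj N S) 1"
  unfolding fourier_proj_def
  by (rule op_bound_unitary_conj[OF fourier_carrier fourier_adjoint_mult fourier_mult_adjoint
        coord_proj_carrier op_bound_coord_proj])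

lemma rank_sum_outer_le_card:
  assumes "finite T"
  shows "vec_space.rank N (mat N N (\<lambda>(i, j). \<Sum>w\<in>T. u w i * v w j)) \<le> card T"
  using assms
proof (induction T rule: finite_induct)
  case empty
  have "mat N N (\<lambda>(i, j). \<Sum>w\<in>{}. u w i * v w j) = 0\<^sub>m N N" by (rule eq_matI) auto
  then show ?case using vec_space.rank_0I[of N N] by (metis card.empty order_refl)
next
  case (insert w T)
  define R1 where "R1 = mat N N (\<lambda>(i, j). u w i * v w j)"
  define R where "R = mat N N (\<lambda>(i, j). \<Sum>w\<in>T. u w i * v w j)"
  have R1c: "R1 \<in> carrier_mat N N" and Rc: "R \<in> carrier_mat N N" unfolding R1_def R_def by simp_all
  have "mat N N (\<lambda>(i, j). \<Sum>w\<in>insert w T. u w i * v w j) = R1 + R"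
    unfolding R1_def R_def using insert by (intro eq_matI) auto
  moreover have "vec_space.rank N R1 \<le> 1"
    by (rule vec_space.rank_le_1_product_entries[OF R1c, of "u w" "v w"]) (auto simp: R1_def)
  ultimately show ?case
    using vec_space.rank_subadditive[OF R1c Rc] insert unfolding R_def by simp
qed

lemma rank_fourier_proj: "vec_space.rank N (fourier_proj N S) \<le> card (S \<inter> {..<N})"
proof -
  have "fourier_proj N S = mat N N (\<lambda>(i, j). \<Sum>w\<in>S \<inter> {..<N}. cnj (fourier N $$ (w, i)) * fourier N $$ (w, j))"
  proof (rule eq_matI)
    fix i j assume "i < dim_row (mat N N (\<lambda>(i, j). \<Sum>w\<in>S \<inter> {..<N}. cnj (fourier N $$ (w, i)) * fourier N $$ (w, j)))"
      "j < dim_col (mat N N (\<lambda>(i, j). \<Sum>w\<in>S \<inter> {..<N}. cnj (fourier N $$ (w, i)) * fourier N $$ (w, j)))"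
    then have i: "i < N" and j: "j < N" by auto
    have l: "(mat_adjoint (fourier N) * coord_proj N S) $$ (i, q) = (if q \<in> S then cnj (fourier N $$ (q, i)) else 0)"
      if q: "q < N" for q
    proof -
      have "(mat_adjoint (fourier N) * coord_proj N S) $$ (i, q)
          = (\<Sum>p\<in>{0..<N}. cnj (fourier N $$ (p, i)) * coord_proj N S $$ (p, q))"
        using i q by (simp add: scalar_prod_def)
      also have "\<dots> = (\<Sum>p\<in>{0..<N}. if p = q then (if q \<in> S then cnj (fourier N $$ (q, i)) else 0) else 0)"
        using q by (intro sum.cong refl) (auto simp: index_coord_proj)
      finally show ?thesis using q by simp
    qed
    have "fourier_proj N S $$ (i, j)
        = (\<Sum>q\<in>{0..<N}. (mat_adjoint (fourier N) * coord_proj N S) $$ (i, q) * fourier N $$ (q, j))"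
      unfolding fourier_proj_def using i j by (simp add: scalar_prod_def)
    also have "\<dots> = (\<Sum>q\<in>{0..<N}. if q \<in> S then cnj (fourier N $$ (q, i)) * fourier N $$ (q, j) else 0)"
      by (intro sum.cong refl) (auto simp: l)
    also have "\<dots> = (\<Sum>w\<in>S \<inter> {..<N}. cnj (fourier N $$ (w, i)) * fourier N $$ (w, j))"
      by (simp add: sum.If_cases atLeast0LessThan Int_commute)
    finally show "fourier_proj N S $$ (i, j)
        = mat N N (\<lambda>(i, j). \<Sum>w\<in>S \<inter> {..<N}. cnj (fourier N $$ (w, i)) * fourier N $$ (w, j)) $$ (i, j)"
      using i j by simp
  qed (auto simp: fourier_proj_def)
  then show ?thesis by (simp add: rank_sum_outer_le_card)
qed

section \<open>A parametrix along a chain of projections\<close>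

text \<open>For any matrices \<open>X k\<close> with \<open>X 0 = 1\<close>, the recursions below maintain
  \<open>1 - X k = Z\<^sub>k (B - z) + R\<^sub>k\<close>: multiplying the identity for \<open>k\<close> by \<open>z\<^sup>-\<^sup>1 (1 - X (k+1)) B\<close>
  and using \<open>(1 - X (k+1)) (B - z) = (1 - X (k+1)) B - z (1 - X (k+1))\<close> gives it for \<open>k + 1\<close>.\<close>

primrec parametrix :: "nat \<Rightarrow> complex mat \<Rightarrow> (nat \<Rightarrow> complex mat) \<Rightarrow> complex \<Rightarrow> nat \<Rightarrow> complex mat" where
  "parametrix N B X z 0 = 0\<^sub>m N N"
| "parametrix N B X z (Suc k) = (1 / z) \<cdot>\<^sub>m ((1\<^sub>m N - X (Suc k)) * B * parametrix N B X z k)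
      - (1 / z) \<cdot>\<^sub>m (1\<^sub>m N - X (Suc k))"

primrec parametrix_rem :: "nat \<Rightarrow> complex mat \<Rightarrow> (nat \<Rightarrow> complex mat) \<Rightarrow> complex \<Rightarrow> nat \<Rightarrow> complex mat" where
  "parametrix_rem N B X z 0 = 0\<^sub>m N N"
| "parametrix_rem N B X z (Suc k) = (1 / z) \<cdot>\<^sub>m ((1\<^sub>m N - X (Suc k)) * B * parametrix_rem N B X z k)
      + (1 / z) \<cdot>\<^sub>m ((1\<^sub>m N - X (Suc k)) * B * X k)"

lemma parametrix_carrier:
  assumes B: "B \<in> carrier_mat N N" and X: "\<And>k. X k \<in> carrier_mat N N"
  shows "parametrix N B X z k \<in> carrier_mat N N" "parametrix_rem N B X z k \<in> carrier_mat N N"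
proof (induction k)
  case (Suc k)
  have "1\<^sub>m N - X (Suc k) \<in> carrier_mat N N" by (rule minus_carrier_mat[OF X])
  then show "parametrix N B X z (Suc k) \<in> carrier_mat N N" "parametrix_rem N B X z (Suc k) \<in> carrier_mat N N"
    using Suc B X by (auto intro!: minus_carrier_mat add_carrier_mat mult_carrier_mat smult_carrier_mat)
qed simp_all

lemma parametrix_step:
  fixes Y B Z R X' :: "complex mat"
  assumes c: "Y \<in> carrier_mat N N" "B \<in> carrier_mat N N" "Z \<in> carrier_mat N N"
    "R \<in> carrier_mat N N" "X' \<in> carrier_mat N N"
    and inv: "1\<^sub>m N - X' = Z * (B - z \<cdot>\<^sub>m 1\<^sub>m N) + R" and z: "z \<noteq> 0"
  shows "Y = ((1 / z) \<cdot>\<^sub>m (Y * B * Z) - (1 / z) \<cdot>\<^sub>m Y) * (B - z \<cdot>\<^sub>m 1\<^sub>m N)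
           + ((1 / z) \<cdot>\<^sub>m (Y * B * R) + (1 / z) \<cdot>\<^sub>m (Y * B * X'))"
proof -
  define W where "W = B - z \<cdot>\<^sub>m 1\<^sub>m N"
  define P where "P = Y * B"
  have W: "W \<in> carrier_mat N N" and P: "P \<in> carrier_mat N N" unfolding W_def P_def using c by auto
  have "P * (Z * W) + P * R = P * (1\<^sub>m N - X')"
    unfolding inv W_def[symmetric] using P c W by (simp add: mult_add_distrib_mat[OF P mult_carrier_mat[OF c(3) W] c(4)])
  also have "\<dots> = P - P * X'" using P c by (simp add: mult_minus_distrib_mat[OF P one_carrier_mat c(5)])
  finally have PZW: "P * (Z * W) + P * R = P - P * X'" .
  have YW: "Y * W = P - z \<cdot>\<^sub>m Y"
    unfolding W_def P_def using c
    by (simp add: mult_minus_distrib_mat[OF c(1,2) smult_carrier_mat[OF one_carrier_mat]]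
        mult_smult_distrib[OF c(1) one_carrier_mat])
  have dist: "((1 / z) \<cdot>\<^sub>m (P * Z) - (1 / z) \<cdot>\<^sub>m Y) * W = (1 / z) \<cdot>\<^sub>m (P * (Z * W)) - (1 / z) \<cdot>\<^sub>m (Y * W)"
    using P c W by (simp add: minus_mult_distrib_mat[of _ N N _ _ N] mult_smult_assoc_mat[of _ N N _ N])
  show ?thesis unfolding W_def[symmetric] P_def[symmetric] dist
  proof (rule eq_matI)
    fix i j assume "i < dim_row ((1 / z) \<cdot>\<^sub>m (P * (Z * W)) - (1 / z) \<cdot>\<^sub>m (Y * W)
        + ((1 / z) \<cdot>\<^sub>m (P * R) + (1 / z) \<cdot>\<^sub>m (P * X')))"
      "j < dim_col ((1 / z) \<cdot>\<^sub>m (P * (Z * W)) - (1 / z) \<cdot>\<^sub>m (Y * W)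
        + ((1 / z) \<cdot>\<^sub>m (P * R) + (1 / z) \<cdot>\<^sub>m (P * X')))"
    then have i: "i < N" and j: "j < N" using P c by auto
    have PZW_ij: "(P * (Z * W)) $$ (i, j) + (P * R) $$ (i, j) = P $$ (i, j) - (P * X') $$ (i, j)"
      using arg_cong[OF PZW, of "\<lambda>A. A $$ (i, j)"] i j P c W by simp
    have YW_ij: "(Y * W) $$ (i, j) = P $$ (i, j) - z * Y $$ (i, j)"
      using arg_cong[OF YW, of "\<lambda>A. A $$ (i, j)"] i j P c by simp
    have "((1 / z) \<cdot>\<^sub>m (P * (Z * W)) - (1 / z) \<cdot>\<^sub>m (Y * W)
        + ((1 / z) \<cdot>\<^sub>m (P * R) + (1 / z) \<cdot>\<^sub>m (P * X'))) $$ (i, j)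
        = (1 / z) * ((P * (Z * W)) $$ (i, j) + (P * R) $$ (i, j) + (P * X') $$ (i, j) - (Y * W) $$ (i, j))"
      using i j P c W by (simp add: algebra_simps)
    also have "\<dots> = Y $$ (i, j)" unfolding PZW_ij YW_ij using z by simp
    finally show "Y $$ (i, j) = ((1 / z) \<cdot>\<^sub>m (P * (Z * W)) - (1 / z) \<cdot>\<^sub>m (Y * W)
        + ((1 / z) \<cdot>\<^sub>m (P * R) + (1 / z) \<cdot>\<^sub>m (P * X'))) $$ (i, j)" by (rule sym)
  qed (use P c W in auto)
qed

lemma parametrix_identity:
  assumes B: "B \<in> carrier_mat N N" and X: "\<And>k. X k \<in> carrier_mat N N"
    and X0: "X 0 = 1\<^sub>m N" and z: "z \<noteq> 0"
  shows "1\<^sub>m N - X k = parametrix N B X z k * (B - z \<cdot>\<^sub>m 1\<^sub>m N) + parametrix_rem N B X z k"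
proof (induction k)
  case 0
  show ?case unfolding X0 by (rule eq_matI) auto
next
  case (Suc k)
  show ?case
    unfolding parametrix.simps parametrix_rem.simps
    by (rule parametrix_step[OF minus_carrier_mat[OF X] B parametrix_carrier[OF B X] X Suc z])
qed

lemma op_bound_parametrix_rem:
  assumes B: "B \<in> carrier_mat N N" and X: "\<And>k. X k \<in> carrier_mat N N"
    and YB: "\<And>k. op_bound N ((1\<^sub>m N - X (Suc k)) * B) 1"
    and eps: "\<And>k. op_bound N ((1\<^sub>m N - X (Suc k)) * B * X k) (\<epsilon> (Suc k))"
  shows "op_bound N (parametrix_rem N B X z k) (\<Sum>j<k. (1 / cmod z) ^ (j + 1) * \<epsilon> (k - j))"
proof (induction k)
  case 0 then show ?case by (simp add: op_bound_zero)
next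
  case (Suc k)
  define Y where "Y = 1\<^sub>m N - X (Suc k)"
  define r where "r = (\<Sum>j<k. (1 / cmod z) ^ (j + 1) * \<epsilon> (k - j))"
  have Y: "Y \<in> carrier_mat N N" unfolding Y_def by (rule minus_carrier_mat[OF X])
  have R: "parametrix_rem N B X z k \<in> carrier_mat N N" by (rule parametrix_carrier[OF B X])
  have "op_bound N (Y * B * parametrix_rem N B X z k) (1 * r)"
    using op_bound_mult[OF mult_carrier_mat[OF Y B] R YB[of k, folded Y_def]] Suc.IH unfolding r_def by simp
  then have "op_bound N (parametrix_rem N B X z (Suc k)) (cmod (1 / z) * (1 * r) + cmod (1 / z) * \<epsilon> (Suc k))"
    unfolding parametrix_rem.simps Y_def[symmetric] using Y B R X[of k]
    by (intro op_bound_add op_bound_smult eps[of k, folded Y_def]) auto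
  moreover have "cmod (1 / z) * (1 * r) + cmod (1 / z) * \<epsilon> (Suc k)
      = (\<Sum>j<Suc k. (1 / cmod z) ^ (j + 1) * \<epsilon> (Suc k - j))"
    unfolding sum.lessThan_Suc_shift r_def by (simp add: sum_distrib_left norm_divide algebra_simps)
  ultimately show ?case by simp
qed

section \<open>Block structure of the baker's map\<close>

lemma eq_add_mult_iff_mod_div:
  fixes K :: nat assumes "0 < K" "r < K"
  shows "p = r + a * K \<longleftrightarrow> r = p mod K \<and> p div K = a"
proof
  assume "p = r + a * K" then show "r = p mod K \<and> p div K = a" using assms by simp
next
  assume "r = p mod K \<and> p div K = a" then show "p = r + a * K" by (metis div_mult_mod_eq add.commute)
qed

lemma sum_lessThan_mult_blocks:
  fixes K M :: nat shows "(\<Sum>i<K * M. f i) = (\<Sum>a<M. \<Sum>r<K. f (a * K + r))"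
proof -
  have "(\<Sum>i<K * M. f i) = (\<Sum>a<M. sum f {a * K..<a * K + K})"
    using sum.nat_group[of f K M] by (simp add: mult.commute)
  also have "\<dots> = (\<Sum>a<M. \<Sum>r<K. f (a * K + r))"
  proof (rule sum.cong[OF refl])
    fix a
    have "sum f {a * K..<a * K + K} = sum f {0 + a * K..<K + a * K}" by (simp add: add.commute)
    also have "\<dots> = (\<Sum>r\<in>{0..<K}. f (r + a * K))" by (rule sum.shift_bounds_nat_ivl)
    finally show "sum f {a * K..<a * K + K} = (\<Sum>r<K. f (a * K + r))"
      by (simp add: atLeast0LessThan add.commute)
  qed
  finally show ?thesis .
qed

lemma block_index_less: fixes K M :: nat assumes "a < M" "r < K" shows "a * K + r < K * M"
proof -
  have "a * K + r < (a + 1) * K" using assms by simp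
  also have "\<dots> \<le> M * K" using assms by (intro mult_right_mono) auto
  finally show ?thesis by (simp add: mult.commute)
qed

lemma sum_if_div_eq:
  fixes K M :: nat assumes "a < M"
  shows "(\<Sum>q<K * M. if q div K = a then g q else 0) = (\<Sum>r<K. g (a * K + r))"
proof -
  have "(\<Sum>q<K * M. if q div K = a then g q else 0)
      = (\<Sum>b<M. \<Sum>r<K. if (b * K + r) div K = a then g (b * K + r) else 0)"
    by (rule sum_lessThan_mult_blocks)
  also have "\<dots> = (\<Sum>b<M. if b = a then (\<Sum>r<K. g (b * K + r)) else 0)"
    by (intro sum.cong refl) auto
  finally show ?thesis using assms by simp
qed

lemma Pi_op_carrier: "Pi_op K M a \<in> carrier_mat K (K * M)"
  unfolding Pi_op_def by simp

lemma index_Pi_op: "j < K \<Longrightarrow> m < K * M \<Longrightarrow> Pi_op K M a $$ (j, m) = (if m = j + a * K then 1 else 0)"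
  unfolding Pi_op_def by simp

lemma chi_op_carrier: "chi_op chi K \<in> carrier_mat K K"
  unfolding chi_op_def by simp

lemma index_chi_op:
  "i < K \<Longrightarrow> j < K \<Longrightarrow> chi_op chi K $$ (i, j) = (if i = j then complex_of_real (chi (real j / real K)) else 0)"
  unfolding chi_op_def by simp

definition baker_block :: "(real \<Rightarrow> real) \<Rightarrow> nat \<Rightarrow> complex mat" where
  "baker_block chi K = chi_op chi K * fourier K * chi_op chi K"

lemma baker_block_carrier: "baker_block chi K \<in> carrier_mat K K"
  unfolding baker_block_def using chi_op_carrier fourier_carrier by (metis mult_carrier_mat)

lemma index_baker_block:
  assumes "p < K" "q < K"
  shows "baker_block chi K $$ (p, q)
    = of_real (chi (real p / real K)) * fourier K $$ (p, q) * of_real (chi (real q / real K))"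
proof -
  have a: "(chi_op chi K * fourier K) $$ (p, r) = of_real (chi (real p / real K)) * fourier K $$ (p, r)"
    if r: "r < K" for r
  proof -
    have "(chi_op chi K * fourier K) $$ (p, r) = (\<Sum>s\<in>{0..<K}. chi_op chi K $$ (p, s) * fourier K $$ (s, r))"
      using assms r by (simp add: scalar_prod_def chi_op_def)
    also have "\<dots> = (\<Sum>s\<in>{0..<K}. if s = p then of_real (chi (real p / real K)) * fourier K $$ (p, r) else 0)"
      using assms by (intro sum.cong refl) (auto simp: index_chi_op)
    finally show ?thesis using assms by simp
  qed
  have "baker_block chi K $$ (p, q) = (\<Sum>r\<in>{0..<K}. (chi_op chi K * fourier K) $$ (p, r) * chi_op chi K $$ (r, q))"
    unfolding baker_block_def using assms by (simp add: scalar_prod_def chi_op_def)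
  also have "\<dots> = (\<Sum>r\<in>{0..<K}. if r = q then of_real (chi (real p / real K)) * fourier K $$ (p, q)
      * of_real (chi (real q / real K)) else 0)"
    using assms by (intro sum.cong refl) (auto simp: index_chi_op a)
  finally show ?thesis using assms by simp
qed

definition baker_piece :: "nat \<Rightarrow> nat \<Rightarrow> (real \<Rightarrow> real) \<Rightarrow> nat \<Rightarrow> complex mat" where
  "baker_piece K M chi a = mat_adjoint (Pi_op K M a) * baker_block chi K * Pi_op K M a"

lemma index_baker_piece:
  assumes K: "0 < K" and p: "p < K * M" and j: "j < K * M"
  shows "baker_piece K M chi a $$ (p, j)
    = (if p div K = a \<and> j div K = a then baker_block chi K $$ (p mod K, j mod K) else 0)"
proof -
  define C where "C = baker_block chi K"
  have C: "C \<in> carrier_mat K K" unfolding C_def by (rule baker_block_carrier)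
  have l: "(mat_adjoint (Pi_op K M a) * C) $$ (p, q) = (if p div K = a then C $$ (p mod K, q) else 0)"
    if q: "q < K" for q
  proof -
    have "(mat_adjoint (Pi_op K M a) * C) $$ (p, q) = (\<Sum>r\<in>{0..<K}. cnj (Pi_op K M a $$ (r, p)) * C $$ (r, q))"
      using p q C Pi_op_carrier[of K M a] by (simp add: scalar_prod_def)
    also have "\<dots> = (\<Sum>r\<in>{0..<K}. if r = p mod K then (if p div K = a then C $$ (r, q) else 0) else 0)"
      using p by (intro sum.cong refl) (auto simp: index_Pi_op eq_add_mult_iff_mod_div[OF K])
    finally show ?thesis using K by simp
  qed
  have "baker_piece K M chi a $$ (p, j) = (\<Sum>q\<in>{0..<K}. (mat_adjoint (Pi_op K M a) * C) $$ (p, q) * Pi_op K M a $$ (q, j))"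
    unfolding baker_piece_def C_def[symmetric] using p j C Pi_op_carrier[of K M a] by (simp add: scalar_prod_def)
  also have "\<dots> = (\<Sum>q\<in>{0..<K}. if q = j mod K then (if p div K = a \<and> j div K = a then C $$ (p mod K, q) else 0) else 0)"
    using j by (intro sum.cong refl) (auto simp: index_Pi_op eq_add_mult_iff_mod_div[OF K] l)
  finally show ?thesis unfolding C_def using K by simp
qed

lemma dim_baker_piece [simp]:
  "dim_row (baker_piece K M chi a) = K * M" "dim_col (baker_piece K M chi a) = K * M"
  unfolding baker_piece_def using Pi_op_carrier[of K M a] by auto

definition baker_core :: "nat \<Rightarrow> nat \<Rightarrow> nat set \<Rightarrow> (real \<Rightarrow> real) \<Rightarrow> complex mat" where
  "baker_core K M A chi = mat (K * M) (K * M) (\<lambda>(p, j).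
     if p div K = j div K \<and> j div K \<in> A then baker_block chi K $$ (p mod K, j mod K) else 0)"

lemma baker_core_carrier: "baker_core K M A chi \<in> carrier_mat (K * M) (K * M)"
  unfolding baker_core_def by simp

lemma baker_eq_fourier_adjoint_mult_core:
  assumes K: "0 < K" and A: "A \<subseteq> {0..<M}"
  shows "baker M A chi K = mat_adjoint (fourier (K * M)) * baker_core K M A chi"
proof (rule eq_matI)
  have fin: "finite A" using A finite_subset by blast
  fix i j assume "i < dim_row (mat_adjoint (fourier (K * M)) * baker_core K M A chi)"
    "j < dim_col (mat_adjoint (fourier (K * M)) * baker_core K M A chi)"
  then have i: "i < K * M" and j: "j < K * M" using baker_core_carrier[of K M A chi] by auto
  have summand: "mat_adjoint (fourier (K * M)) * mat_adjoint (Pi_op K M a) * chi_op chi K * fourier K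
      * chi_op chi K * Pi_op K M a = mat_adjoint (fourier (K * M)) * baker_piece K M chi a" for a
    unfolding baker_piece_def baker_block_def
    using fourier_adjoint_carrier[of "K * M"] mat_adjoint_carrier[OF Pi_op_carrier[of K M a]]
      chi_op_carrier[of chi K] fourier_carrier[of K] Pi_op_carrier[of K M a]
    by (simp add: assoc_mult_mat[of _ "K * M" "K * M" _ K] assoc_mult_mat[of _ "K * M" K _ K]
        assoc_mult_mat[of _ K K _ K] assoc_mult_mat[of _ K K _ "K * M"])
  have pieces: "(\<Sum>a\<in>A. baker_piece K M chi a $$ (p, j)) = baker_core K M A chi $$ (p, j)"
    if p: "p < K * M" for p
  proof -
    have "(\<Sum>a\<in>A. baker_piece K M chi a $$ (p, j)) = (\<Sum>a\<in>A. if a = p div K then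
        (if j div K = p div K then baker_block chi K $$ (p mod K, j mod K) else 0) else 0)"
      using p j by (intro sum.cong refl) (auto simp: index_baker_piece[OF K])
    then show ?thesis using fin p j unfolding baker_core_def by auto
  qed
  have "baker M A chi K $$ (i, j) = (\<Sum>a\<in>A. (mat_adjoint (fourier (K * M)) * baker_piece K M chi a) $$ (i, j))"
    unfolding baker_def using i j by (simp add: summand)
  also have "\<dots> = (\<Sum>a\<in>A. \<Sum>p\<in>{0..<K * M}. cnj (fourier (K * M) $$ (p, i)) * baker_piece K M chi a $$ (p, j))"
    using i j by (intro sum.cong refl) (simp add: scalar_prod_def)
  also have "\<dots> = (\<Sum>p\<in>{0..<K * M}. cnj (fourier (K * M) $$ (p, i)) * (\<Sum>a\<in>A. baker_piece K M chi a $$ (p, j)))"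
    by (subst sum.swap) (simp add: sum_distrib_left)
  also have "\<dots> = (mat_adjoint (fourier (K * M)) * baker_core K M A chi) $$ (i, j)"
    using i j baker_core_carrier[of K M A chi] by (simp add: scalar_prod_def pieces)
  finally show "baker M A chi K $$ (i, j) = (mat_adjoint (fourier (K * M)) * baker_core K M A chi) $$ (i, j)" .
next
  show "dim_row (baker M A chi K) = dim_row (mat_adjoint (fourier (K * M)) * baker_core K M A chi)"
    "dim_col (baker M A chi K) = dim_col (mat_adjoint (fourier (K * M)) * baker_core K M A chi)"
    unfolding baker_def using baker_core_carrier[of K M A chi] by simp_all
qed

lemma baker_core_mult_vec:
  assumes K: "0 < K" and u: "u \<in> carrier_vec (K * M)" and i: "i < K * M"
  shows "(baker_core K M A chi *\<^sub>v u) $ i = (if i div K \<in> A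
      then (\<Sum>r<K. baker_block chi K $$ (i mod K, r) * u $ (i div K * K + r)) else 0)"
proof -
  have "(baker_core K M A chi *\<^sub>v u) $ i = (\<Sum>q<K * M. baker_core K M A chi $$ (i, q) * u $ q)"
    using u i baker_core_carrier[of K M A chi] by (simp add: scalar_prod_def atLeast0LessThan)
  also have "\<dots> = (\<Sum>q<K * M. if q div K = i div K then (if i div K \<in> A
      then baker_block chi K $$ (i mod K, q mod K) * u $ q else 0) else 0)"
    using i by (intro sum.cong refl) (auto simp: baker_core_def)
  also have "\<dots> = (\<Sum>r<K. if i div K \<in> A then baker_block chi K $$ (i mod K, (i div K * K + r) mod K)
      * u $ (i div K * K + r) else 0)"
    using i by (intro sum_if_div_eq less_mult_imp_div_less) (simp add: mult.commute)
  finally show ?thesis by auto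
qed

lemma op_bound_baker_core:
  assumes K: "0 < K" and range: "\<And>x. 0 \<le> chi x \<and> chi x \<le> 1"
  shows "op_bound (K * M) (baker_core K M A chi) 1"
proof (rule op_boundI_sq)
  fix u :: "complex vec" assume u: "u \<in> carrier_vec (K * M)"
  define v where "v a = vec K (\<lambda>r. of_real (chi (real r / real K)) * u $ (a * K + r))" for a
  have vc: "v a \<in> carrier_vec K" for a unfolding v_def by simp
  have chi_le_1: "cmod (of_real (chi (real r / real K)) * x) \<le> cmod x" for r and x :: complex
    using range[of "real r / real K"] by (auto simp: norm_mult intro!: mult_left_le_one_le)
  have entry: "cmod ((baker_core K M A chi *\<^sub>v u) $ (a * K + j)) \<le> cmod ((fourier K *\<^sub>v v a) $ j)"
    if a: "a < M" and j: "j < K" for a j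
  proof -
    have "(baker_core K M A chi *\<^sub>v u) $ (a * K + j) = (if a \<in> A
        then (\<Sum>r<K. baker_block chi K $$ (j, r) * u $ (a * K + r)) else 0)"
      using baker_core_mult_vec[OF K u block_index_less[OF a j]] j by simp
    also have "(\<Sum>r<K. baker_block chi K $$ (j, r) * u $ (a * K + r))
        = of_real (chi (real j / real K)) * (fourier K *\<^sub>v v a) $ j"
      using j by (simp add: index_baker_block scalar_prod_def v_def sum_distrib_left atLeast0LessThan algebra_simps)
    finally show ?thesis using chi_le_1 by auto
  qed
  have "sq_l2norm (baker_core K M A chi *\<^sub>v u) = (\<Sum>i<K * M. (cmod ((baker_core K M A chi *\<^sub>v u) $ i))\<^sup>2)"
    unfolding sq_l2norm_def using baker_core_carrier[of K M A chi] by simp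
  also have "\<dots> = (\<Sum>a<M. \<Sum>j<K. (cmod ((baker_core K M A chi *\<^sub>v u) $ (a * K + j)))\<^sup>2)"
    by (rule sum_lessThan_mult_blocks)
  also have "\<dots> \<le> (\<Sum>a<M. \<Sum>j<K. (cmod ((fourier K *\<^sub>v v a) $ j))\<^sup>2)"
    using entry by (intro sum_mono power_mono) auto
  also have "\<dots> = (\<Sum>a<M. sq_l2norm (v a))"
    using sq_l2norm_unitary[OF fourier_carrier fourier_adjoint_mult[OF K] vc]
    unfolding sq_l2norm_def by simp
  also have "\<dots> \<le> (\<Sum>a<M. \<Sum>r<K. (cmod (u $ (a * K + r)))\<^sup>2)"
  proof (rule sum_mono)
    fix a
    have "sq_l2norm (v a) = (\<Sum>r<K. (cmod (of_real (chi (real r / real K)) * u $ (a * K + r)))\<^sup>2)"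
      unfolding sq_l2norm_def v_def by simp
    also have "\<dots> \<le> (\<Sum>r<K. (cmod (u $ (a * K + r)))\<^sup>2)"
      using chi_le_1 by (intro sum_mono power_mono) auto
    finally show "sq_l2norm (v a) \<le> (\<Sum>r<K. (cmod (u $ (a * K + r)))\<^sup>2)" .
  qed
  also have "\<dots> = 1\<^sup>2 * sq_l2norm u"
    unfolding sq_l2norm_def using u sum_lessThan_mult_blocks[of "\<lambda>i. (cmod (u $ i))\<^sup>2" K M] by simp
  finally show "sq_l2norm (baker_core K M A chi *\<^sub>v u) \<le> 1\<^sup>2 * sq_l2norm u" .
qed simp

lemma op_bound_baker:
  assumes K: "0 < K" and M: "0 < M" and A: "A \<subseteq> {0..<M}" and range: "\<And>x. 0 \<le> chi x \<and> chi x \<le> 1"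
  shows "op_bound (K * M) (baker M A chi K) 1"
  using op_bound_mult[OF fourier_adjoint_carrier baker_core_carrier op_bound_fourier_adjoint
      op_bound_baker_core[OF K range]] K M
  by (simp add: baker_eq_fourier_adjoint_mult_core[OF K A])

section \<open>The baker's map in frequency variables\<close>

lemma e2pi_mult_nat: "e2pi (real a * real t) = 1"
  using e2pi_of_nat[of "a * t"] by simp

lemma parseval_folded_exp_sum:
  fixes c :: "nat \<Rightarrow> complex" and K M :: nat
  assumes M: "0 < M"
  shows "(\<Sum>a<M. (cmod (\<Sum>\<xi><K * M. e2pi (real a * real \<xi> / real M) * c \<xi>))\<^sup>2)
       = real M * (\<Sum>r<M. (cmod (\<Sum>t<K. c (t * M + r)))\<^sup>2)"
proof -
  define b where "b = vec M (\<lambda>r. \<Sum>t<K. c (t * M + r))"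
  have bc: "b \<in> carrier_vec M" unfolding b_def by simp
  have inner: "(\<Sum>\<xi><K * M. e2pi (real a * real \<xi> / real M) * c \<xi>)
      = of_real (sqrt (real M)) * (mat_adjoint (fourier M) *\<^sub>v b) $ a"
    if a: "a < M" for a
  proof -
    have "(\<Sum>\<xi><K * M. e2pi (real a * real \<xi> / real M) * c \<xi>) = (\<Sum>\<xi><M * K. e2pi (real a * real \<xi> / real M) * c \<xi>)"
      by (simp add: mult.commute)
    also have "\<dots> = (\<Sum>t<K. \<Sum>r<M. e2pi (real a * real (t * M + r) / real M) * c (t * M + r))"
      by (rule sum_lessThan_mult_blocks)
    also have "\<dots> = (\<Sum>t<K. \<Sum>r<M. e2pi (real a * real r / real M) * c (t * M + r))"
    proof (intro sum.cong refl)
      fix t r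
      have "real a * real (t * M + r) / real M = real a * real t + real a * real r / real M"
        using M by (simp add: field_simps)
      then show "e2pi (real a * real (t * M + r) / real M) * c (t * M + r) = e2pi (real a * real r / real M) * c (t * M + r)"
        by (simp add: e2pi_add e2pi_mult_nat)
    qed
    also have "\<dots> = (\<Sum>r<M. e2pi (real a * real r / real M) * b $ r)"
      unfolding b_def by (subst sum.swap) (simp add: sum_distrib_left)
    also have "\<dots> = of_real (sqrt (real M)) * (mat_adjoint (fourier M) *\<^sub>v b) $ a"
    proof -
      have "(mat_adjoint (fourier M) *\<^sub>v b) $ a = (\<Sum>r<M. e2pi (real r * real a / real M) / of_real (sqrt (real M)) * b $ r)"
        using a bc by (simp add: scalar_prod_def index_fourier cnj_e2pi atLeast0LessThan)
      moreover have "sqrt (real M) \<noteq> 0" using M by simp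
      ultimately show ?thesis by (simp add: sum_distrib_left mult.commute mult.left_commute)
    qed
    finally show ?thesis .
  qed
  have "(\<Sum>a<M. (cmod (\<Sum>\<xi><K * M. e2pi (real a * real \<xi> / real M) * c \<xi>))\<^sup>2)
      = (\<Sum>a<M. real M * (cmod ((mat_adjoint (fourier M) *\<^sub>v b) $ a))\<^sup>2)"
    by (intro sum.cong refl) (simp add: inner norm_mult power_mult_distrib)
  also have "\<dots> = real M * sq_l2norm (mat_adjoint (fourier M) *\<^sub>v b)"
    unfolding sq_l2norm_def by (simp add: sum_distrib_left)
  also have "sq_l2norm (mat_adjoint (fourier M) *\<^sub>v b) = sq_l2norm b"
    by (rule sq_l2norm_unitary[OF fourier_adjoint_carrier _ bc]) (use fourier_mult_adjoint[OF M] mat_adjoint_adjoint in auto)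
  also have "sq_l2norm b = (\<Sum>r<M. (cmod (\<Sum>t<K. c (t * M + r)))\<^sup>2)" unfolding sq_l2norm_def b_def by simp
  finally show ?thesis .
qed

lemma norm_sum_sq_le_weighted:
  fixes x y :: "'a \<Rightarrow> complex"
  shows "(cmod (\<Sum>t\<in>T. x t * y t))\<^sup>2 \<le> (\<Sum>t\<in>T. cmod (x t)) * (\<Sum>t\<in>T. cmod (x t) * (cmod (y t))\<^sup>2)"
proof -
  have "cmod (\<Sum>t\<in>T. x t * y t) \<le> (\<Sum>t\<in>T. sqrt (cmod (x t)) * (sqrt (cmod (x t)) * cmod (y t)))"
    using norm_sum[of "\<lambda>t. x t * y t" T] by (simp add: norm_mult mult.assoc[symmetric])
  then have "(cmod (\<Sum>t\<in>T. x t * y t))\<^sup>2 \<le> (\<Sum>t\<in>T. sqrt (cmod (x t)) * (sqrt (cmod (x t)) * cmod (y t)))\<^sup>2"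
    by (simp add: power_mono)
  also have "\<dots> \<le> (\<Sum>t\<in>T. (sqrt (cmod (x t)))\<^sup>2) * (\<Sum>t\<in>T. (sqrt (cmod (x t)) * cmod (y t))\<^sup>2)"
    by (rule Cauchy_Schwarz_ineq_sum)
  also have "\<dots> = (\<Sum>t\<in>T. cmod (x t)) * (\<Sum>t\<in>T. cmod (x t) * (cmod (y t))\<^sup>2)"
    by (simp add: power_mult_distrib)
  finally show ?thesis .
qed

definition kernel_phase :: "nat \<Rightarrow> nat \<Rightarrow> nat \<Rightarrow> nat \<Rightarrow> real" where
  "kernel_phase K M j \<xi> = real \<xi> / real (K * M) - real j / real K"

definition baker_kernel :: "nat \<Rightarrow> nat \<Rightarrow> (real \<Rightarrow> real) \<Rightarrow> nat \<Rightarrow> nat \<Rightarrow> complex" where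
  "baker_kernel K M chi j \<xi> = (\<Sum>r<K. of_real (chi (real r / real K)) * e2pi (kernel_phase K M j \<xi>) ^ r)
     / (of_real (sqrt (real K)) * of_real (sqrt (real (K * M))))"

lemma baker_block_mult_fourier_adjoint:
  assumes K: "0 < K" and M: "0 < M" and w: "w \<in> carrier_vec (K * M)" and a: "a < M" and j: "j < K" and r: "r < K"
  shows "baker_block chi K $$ (j, r) * (mat_adjoint (fourier (K * M)) *\<^sub>v w) $ (a * K + r)
    = of_real (chi (real j / real K)) * (\<Sum>\<xi><K * M. e2pi (real a * real \<xi> / real M) *
        (of_real (chi (real r / real K)) * e2pi (kernel_phase K M j \<xi>) ^ r
          / (of_real (sqrt (real K)) * of_real (sqrt (real (K * M))))) * w $ \<xi>)"
proof -
  define N where "N = K * M"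
  have p: "a * K + r < N" unfolding N_def by (rule block_index_less[OF a r])
  have e: "e2pi (- (real j * real r / real K)) * e2pi (real \<xi> * real (a * K + r) / real N)
      = e2pi (real a * real \<xi> / real M) * e2pi (kernel_phase K M j \<xi>) ^ r" for \<xi>
  proof -
    have "- (real j * real r / real K) + real \<xi> * real (a * K + r) / real N
        = real a * real \<xi> / real M + real r * kernel_phase K M j \<xi>"
      unfolding N_def kernel_phase_def using K M by (simp add: field_simps)
    then show ?thesis by (metis e2pi_add e2pi_power)
  qed
  have "(mat_adjoint (fourier N) *\<^sub>v w) $ (a * K + r)
      = (\<Sum>\<xi><N. e2pi (real \<xi> * real (a * K + r) / real N) / of_real (sqrt (real N)) * w $ \<xi>)"
    using p w N_def by (simp add: scalar_prod_def index_fourier cnj_e2pi atLeast0LessThan)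
  then have "baker_block chi K $$ (j, r) * (mat_adjoint (fourier N) *\<^sub>v w) $ (a * K + r)
      = of_real (chi (real j / real K)) *
        (\<Sum>\<xi><N. (e2pi (- (real j * real r / real K)) * e2pi (real \<xi> * real (a * K + r) / real N))
           * (of_real (chi (real r / real K)) / (of_real (sqrt (real K)) * of_real (sqrt (real N)))) * w $ \<xi>)"
    unfolding index_baker_block[OF j r] index_fourier[OF j r]
    by (simp add: sum_distrib_left sum_divide_distrib algebra_simps)
  also have "\<dots> = of_real (chi (real j / real K)) *
      (\<Sum>\<xi><N. e2pi (real a * real \<xi> / real M) * (of_real (chi (real r / real K)) * e2pi (kernel_phase K M j \<xi>) ^ r
          / (of_real (sqrt (real K)) * of_real (sqrt (real N)))) * w $ \<xi>)"
    by (simp only: e) (simp add: algebra_simps)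
  finally show ?thesis unfolding N_def .
qed

lemma baker_core_fourier_adjoint_mult_vec:
  assumes K: "0 < K" and M: "0 < M" and w: "w \<in> carrier_vec (K * M)" and a: "a < M" and j: "j < K"
  shows "(baker_core K M A chi *\<^sub>v (mat_adjoint (fourier (K * M)) *\<^sub>v w)) $ (a * K + j)
    = (if a \<in> A then of_real (chi (real j / real K)) *
        (\<Sum>\<xi><K * M. e2pi (real a * real \<xi> / real M) * baker_kernel K M chi j \<xi> * w $ \<xi>) else 0)"
proof -
  define x where "x = mat_adjoint (fourier (K * M)) *\<^sub>v w"
  define c where "c = of_real (sqrt (real K)) * (of_real (sqrt (real (K * M))) :: complex)"
  define g where "g r \<xi> = of_real (chi (real r / real K)) * e2pi (kernel_phase K M j \<xi>) ^ r" for r \<xi>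
  define e where "e \<xi> = e2pi (real a * real \<xi> / real M)" for \<xi>
  have xc: "x \<in> carrier_vec (K * M)" unfolding x_def by (rule mult_mat_vec_carrier[OF fourier_adjoint_carrier w])
  have "(baker_core K M A chi *\<^sub>v x) $ (a * K + j)
      = (if a \<in> A then (\<Sum>r<K. baker_block chi K $$ (j, r) * x $ (a * K + r)) else 0)"
    using baker_core_mult_vec[OF K xc block_index_less[OF a j]] j by simp
  also have "(\<Sum>r<K. baker_block chi K $$ (j, r) * x $ (a * K + r))
      = (\<Sum>r<K. of_real (chi (real j / real K)) * (\<Sum>\<xi><K * M. e \<xi> * (g r \<xi> / c) * w $ \<xi>))"
    unfolding x_def c_def g_def e_def
    by (rule sum.cong[OF refl]) (rule baker_block_mult_fourier_adjoint[OF K M w a j], simp)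
  also have "\<dots> = of_real (chi (real j / real K)) * (\<Sum>\<xi><K * M. \<Sum>r<K. e \<xi> * (g r \<xi> / c) * w $ \<xi>)"
    by (subst sum.swap) (simp add: sum_distrib_left)
  also have "\<dots> = of_real (chi (real j / real K)) * (\<Sum>\<xi><K * M. e \<xi> * ((\<Sum>r<K. g r \<xi>) / c) * w $ \<xi>)"
    by (simp add: sum_distrib_left sum_distrib_right sum_divide_distrib)
  finally show ?thesis unfolding x_def c_def g_def e_def baker_kernel_def .
qed

lemma abs_kernel_phase_le_1: assumes "j < K" "\<xi> < K * M" shows "\<bar>kernel_phase K M j \<xi>\<bar> \<le> 1"
proof -
  have "0 < K * M" using assms(2) by linarith
  then have p: "0 < real (K * M)" by (simp only: of_nat_0_less_iff)
  have q: "real \<xi> < real (K * M)" using assms(2) by (simp only: of_nat_less_iff)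
  have "real \<xi> / real (K * M) < 1" using p q by (simp add: divide_less_eq del: of_nat_mult)
  moreover have "real j / real K < 1" using assms by (auto simp: divide_less_eq)
  moreover have "0 \<le> real \<xi> / real (K * M)" "0 \<le> real j / real K" by auto
  moreover have "\<And>a b :: real. a < 1 \<Longrightarrow> b < 1 \<Longrightarrow> 0 \<le> a \<Longrightarrow> 0 \<le> b \<Longrightarrow> \<bar>a - b\<bar> \<le> 1"
    by linarith
  ultimately show ?thesis unfolding kernel_phase_def by blast
qed

lemma abs_kernel_phase_scaled: assumes K: "0 < K" and M: "0 < M"
  shows "real K * \<bar>kernel_phase K M j \<xi>\<bar> = \<bar>real \<xi> / real M - real j\<bar>"
proof -
  have "real K * kernel_phase K M j \<xi> = real \<xi> / real M - real j"
    unfolding kernel_phase_def using K M by (simp add: field_simps)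
  then show ?thesis using K by (metis abs_mult abs_of_nat)
qed

lemma norm_baker_kernel_le:
  assumes chi: "Cc_inf_01 chi" and range: "\<And>x. 0 \<le> chi x \<and> chi x \<le> 1"
    and K: "0 < K" and M: "0 < M" and j: "j < K" and \<xi>: "\<xi> < K * M"
    and y: "0 < real K * circ_dist (kernel_phase K M j \<xi>) 0"
  shows "cmod (baker_kernel K M chi j \<xi>) \<le> decay_profile chi (real K * circ_dist (kernel_phase K M j \<xi>) 0) / sqrt (real M)"
proof -
  define t where "t = kernel_phase K M j \<xi>"
  have S: "cmod (\<Sum>m<K. of_real (chi (real m / real K)) * exp (\<i> * of_real (2 * pi * t)) ^ m)
      \<le> real K * decay_profile chi (real K * circ_dist t 0)"
    using norm_sample_exp_sum_le[OF chi range _ abs_kernel_phase_le_1[OF j \<xi>]] K y unfolding t_def by simp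
  have sq: "sqrt (real K) * sqrt (real (K * M)) = real K * sqrt (real M)"
    by (simp add: real_sqrt_mult)
  have "cmod (baker_kernel K M chi j \<xi>) = cmod (\<Sum>m<K. of_real (chi (real m / real K)) * exp (\<i> * of_real (2 * pi * t)) ^ m)
      / (sqrt (real K) * sqrt (real (K * M)))"
    unfolding baker_kernel_def t_def e2pi_eq_exp by (simp add: norm_divide norm_mult)
  also have "\<dots> \<le> real K * decay_profile chi (real K * circ_dist t 0) / (real K * sqrt (real M))"
    unfolding sq using S K M by (intro divide_right_mono) auto
  also have "\<dots> = decay_profile chi (real K * circ_dist t 0) / sqrt (real M)" using K by simp
  finally show ?thesis unfolding t_def .
qed

lemma inv_sq_decay_circ_dist_le:
  assumes K: "0 < K" and M: "0 < M" and j: "j < K" and \<xi>: "\<xi> < K * M"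
  defines "u \<equiv> real \<xi> / real M - real j"
  shows "1 / (1 + real K * circ_dist (kernel_phase K M j \<xi>) 0)\<^sup>2
    \<le> inv_sq_decay u + inv_sq_decay (u - real K) + inv_sq_decay (u + real K)"
proof -
  have Kt: "real K * \<bar>kernel_phase K M j \<xi>\<bar> = \<bar>u\<bar>" unfolding u_def by (rule abs_kernel_phase_scaled[OF K M])
  have y: "real K * circ_dist (kernel_phase K M j \<xi>) 0 = min \<bar>u\<bar> (real K - \<bar>u\<bar>)"
    unfolding circ_dist_0 using Kt K by (simp add: min_mult_distrib_left algebra_simps)
  have "\<bar>u\<bar> \<le> real K"
    using Kt abs_kernel_phase_le_1[OF j \<xi>] by (metis mult.right_neutral mult_left_mono of_nat_0_le_iff)
  then have "1 / (1 + real K * circ_dist (kernel_phase K M j \<xi>) 0)\<^sup>2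
      \<in> {inv_sq_decay u, inv_sq_decay (u - real K), inv_sq_decay (u + real K)}"
    unfolding y inv_sq_decay_def by (auto simp: min_def abs_if)
  then show ?thesis using inv_sq_decay_nonneg by (smt (verit) insert_iff empty_iff)
qed

definition far_kernel :: "nat \<Rightarrow> nat \<Rightarrow> (real \<Rightarrow> real) \<Rightarrow> real \<Rightarrow> nat \<Rightarrow> nat \<Rightarrow> complex" where
  "far_kernel K M chi d j \<xi> =
     (if d / 2 \<le> real K * circ_dist (kernel_phase K M j \<xi>) 0 then baker_kernel K M chi j \<xi> else 0)"

definition kernel_const :: "(real \<Rightarrow> real) \<Rightarrow> nat \<Rightarrow> real \<Rightarrow> real" where
  "kernel_const chi M d = sqrt (decay_profile chi (d / 2)) * quartic_const chi / sqrt (real M)"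

lemma kernel_const_nonneg: "Cc_inf_01 chi \<Longrightarrow> 0 < d \<Longrightarrow> 0 \<le> kernel_const chi M d"
  unfolding kernel_const_def using decay_profile_nonneg[of chi "d / 2"] quartic_const_pos[of chi] by simp

lemma norm_far_kernel_le:
  assumes chi: "Cc_inf_01 chi" and range: "\<And>x. 0 \<le> chi x \<and> chi x \<le> 1"
    and K: "0 < K" and M: "0 < M" and j: "j < K" and \<xi>: "\<xi> < K * M" and d: "0 < d"
  defines "u \<equiv> real \<xi> / real M - real j"
  shows "cmod (far_kernel K M chi d j \<xi>)
    \<le> kernel_const chi M d * (inv_sq_decay u + inv_sq_decay (u - real K) + inv_sq_decay (u + real K))"
proof (cases "d / 2 \<le> real K * circ_dist (kernel_phase K M j \<xi>) 0")
  case False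
  then show ?thesis unfolding far_kernel_def using kernel_const_nonneg[OF chi d, of M] inv_sq_decay_nonneg by simp
next
  case True
  define y where "y = real K * circ_dist (kernel_phase K M j \<xi>) 0"
  have y: "0 < y" "d / 2 \<le> y" using True d unfolding y_def by auto
  have d2: "0 < d / 2" using d by simp
  have h1: "decay_profile chi y \<le> sqrt (decay_profile chi (d / 2)) * sqrt (decay_profile chi y)"
  proof -
    have "decay_profile chi y = sqrt (decay_profile chi y) * sqrt (decay_profile chi y)" using decay_profile_nonneg[OF chi y(1)] by simp
    also have "\<dots> \<le> sqrt (decay_profile chi (d / 2)) * sqrt (decay_profile chi y)"
      using decay_profile_antimono[OF chi d2 y(2)] decay_profile_nonneg[OF chi y(1)] by (intro mult_right_mono real_sqrt_le_mono) auto
    finally show ?thesis .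
  qed
  have "cmod (far_kernel K M chi d j \<xi>) = cmod (baker_kernel K M chi j \<xi>)" unfolding far_kernel_def using True by simp
  also have "\<dots> \<le> decay_profile chi y / sqrt (real M)"
    unfolding y_def by (rule norm_baker_kernel_le[OF chi range K M j \<xi> y(1)[unfolded y_def]])
  also have "\<dots> \<le> sqrt (decay_profile chi (d / 2)) * sqrt (decay_profile chi y) / sqrt (real M)"
    using h1 by (intro divide_right_mono) auto
  also have "\<dots> \<le> sqrt (decay_profile chi (d / 2)) * (quartic_const chi / (1 + y)\<^sup>2) / sqrt (real M)"
    using sqrt_decay_profile_le[OF chi y(1)] decay_profile_nonneg[OF chi d2] by (intro divide_right_mono mult_left_mono) auto
  also have "\<dots> = kernel_const chi M d * (1 / (1 + y)\<^sup>2)" unfolding kernel_const_def by simp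
  also have "\<dots> \<le> kernel_const chi M d * (inv_sq_decay u + inv_sq_decay (u - real K) + inv_sq_decay (u + real K))"
    unfolding y_def u_def by (intro mult_left_mono inv_sq_decay_circ_dist_le[OF K M j \<xi>] kernel_const_nonneg[OF chi d])
  finally show ?thesis .
qed

lemma sum_inv_sq_decay_three_shifts_le_12:
  fixes K :: nat and x :: real
  shows "(\<Sum>t<K. inv_sq_decay (real t + x) + inv_sq_decay (real t + x - real K) + inv_sq_decay (real t + x + real K)) \<le> 12"
  using sum_inv_sq_decay_shift_le_4[of x K] sum_inv_sq_decay_shift_le_4[of "x - real K" K]
    sum_inv_sq_decay_shift_le_4[of "x + real K" K]
  by (simp add: sum.distrib add_diff_eq add.assoc)

lemma sum_norm_far_kernel_col_le:
  assumes chi: "Cc_inf_01 chi" and range: "\<And>x. 0 \<le> chi x \<and> chi x \<le> 1"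
    and K: "0 < K" and M: "0 < M" and \<xi>: "\<xi> < K * M" and d: "0 < d"
  shows "(\<Sum>j<K. cmod (far_kernel K M chi d j \<xi>)) \<le> 12 * kernel_const chi M d"
proof -
  define x where "x = - (real \<xi> / real M)"
  have "(\<Sum>j<K. cmod (far_kernel K M chi d j \<xi>)) \<le> (\<Sum>j<K. kernel_const chi M d *
      (inv_sq_decay (real j + x) + inv_sq_decay (real j + x - real K) + inv_sq_decay (real j + x + real K)))"
  proof (rule sum_mono)
    fix j assume "j \<in> {..<K}"
    then show "cmod (far_kernel K M chi d j \<xi>) \<le> kernel_const chi M d *
        (inv_sq_decay (real j + x) + inv_sq_decay (real j + x - real K) + inv_sq_decay (real j + x + real K))"
      using norm_far_kernel_le[OF chi range K M _ \<xi> d, of j]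
        inv_sq_decay_minus[of "real j + x"] inv_sq_decay_minus[of "real j + x + real K"]
        inv_sq_decay_minus[of "real j + x - real K"]
      unfolding x_def by (simp add: algebra_simps)
  qed
  also have "\<dots> \<le> kernel_const chi M d * 12"
    unfolding sum_distrib_left[symmetric]
    by (intro mult_left_mono sum_inv_sq_decay_three_shifts_le_12 kernel_const_nonneg[OF chi d])
  finally show ?thesis by simp
qed

lemma sum_norm_far_kernel_row_le:
  assumes chi: "Cc_inf_01 chi" and range: "\<And>x. 0 \<le> chi x \<and> chi x \<le> 1"
    and K: "0 < K" and M: "0 < M" and j: "j < K" and r: "r < M" and d: "0 < d"
  shows "(\<Sum>t<K. cmod (far_kernel K M chi d j (t * M + r))) \<le> 12 * kernel_const chi M d"
proof -
  define x where "x = real r / real M - real j"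
  have "(\<Sum>t<K. cmod (far_kernel K M chi d j (t * M + r))) \<le> (\<Sum>t<K. kernel_const chi M d *
      (inv_sq_decay (real t + x) + inv_sq_decay (real t + x - real K) + inv_sq_decay (real t + x + real K)))"
  proof (rule sum_mono)
    fix t assume "t \<in> {..<K}"
    then have tM: "t * M + r < K * M" using block_index_less[of t K r M] r by (simp add: mult.commute)
    have "real (t * M + r) / real M - real j = real t + x" unfolding x_def using M by (simp add: field_simps)
    then show "cmod (far_kernel K M chi d j (t * M + r)) \<le> kernel_const chi M d *
        (inv_sq_decay (real t + x) + inv_sq_decay (real t + x - real K) + inv_sq_decay (real t + x + real K))"
      using norm_far_kernel_le[OF chi range K M j tM d] by simp
  qed
  also have "\<dots> \<le> kernel_const chi M d * 12"
    unfolding sum_distrib_left[symmetric]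
    by (intro mult_left_mono sum_inv_sq_decay_three_shifts_le_12 kernel_const_nonneg[OF chi d])
  finally show ?thesis by simp
qed

lemma far_of_separated:
  assumes K: "0 < K" and M: "0 < M" and j: "j < K" and \<xi>: "\<xi> < K * M"
    and dj: "d \<le> 2 * real K * min (real j / real K) (1 - real j / real K)"
    and sep: "d < \<bar>real j - real \<xi> / real M\<bar>"
  shows "d / 2 \<le> real K * circ_dist (kernel_phase K M j \<xi>) 0"
proof -
  define th where "th = kernel_phase K M j \<xi>"
  have "real K * \<bar>th\<bar> = \<bar>real j - real \<xi> / real M\<bar>"
    unfolding th_def abs_kernel_phase_scaled[OF K M] by (rule abs_minus_commute)
  then have a1: "d / 2 \<le> real K * \<bar>th\<bar>" using sep abs_ge_zero[of "real j - real \<xi> / real M"] by linarith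
  have "0 < real (K * M)" using \<xi> by linarith
  then have "real \<xi> / real (K * M) \<le> 1" "0 \<le> real \<xi> / real (K * M)"
    using \<xi> by (simp_all add: divide_le_eq del: of_nat_mult)
  then have "min (real j / real K) (1 - real j / real K) \<le> 1 - \<bar>th\<bar>"
    unfolding th_def kernel_phase_def by linarith
  then have "real K * min (real j / real K) (1 - real j / real K) \<le> real K * (1 - \<bar>th\<bar>)"
    by (intro mult_left_mono) auto
  then have a2: "d / 2 \<le> real K * (1 - \<bar>th\<bar>)" using dj by linarith
  have "real K * circ_dist th 0 = min (real K * \<bar>th\<bar>) (real K * (1 - \<bar>th\<bar>))"
    unfolding circ_dist_0 by (simp add: min_mult_distrib_left)
  then show ?thesis using a1 a2 unfolding th_def by simp
qed

lemma far_block_mult_vec: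
  fixes S S' :: "nat set"
  assumes K: "0 < K" and M: "0 < M" and w: "w \<in> carrier_vec (K * M)" and a: "a < M" and j: "j < K"
  defines "N \<equiv> K * M"
  shows "((coord_proj N (- S) * baker_core K M A chi * mat_adjoint (fourier N) * coord_proj N S') *\<^sub>v w) $ (a * K + j)
    = (if a * K + j \<in> S \<or> a \<notin> A then 0 else of_real (chi (real j / real K)) *
        (\<Sum>\<xi><N. e2pi (real a * real \<xi> / real M) * baker_kernel K M chi j \<xi> * (coord_proj N S' *\<^sub>v w) $ \<xi>))"
proof -
  define w' where "w' = coord_proj N S' *\<^sub>v w"
  define t where "t = baker_core K M A chi *\<^sub>v (mat_adjoint (fourier N) *\<^sub>v w')"
  have P: "coord_proj N (- S) \<in> carrier_mat N N" and T: "baker_core K M A chi \<in> carrier_mat N N"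
    and F: "mat_adjoint (fourier N) \<in> carrier_mat N N" and w: "w \<in> carrier_vec N"
    unfolding N_def using w by (simp_all add: baker_core_carrier fourier_adjoint_carrier)
  have w': "w' \<in> carrier_vec N" unfolding w'_def using w by (simp add: mult_mat_vec_carrier[OF coord_proj_carrier])
  have t: "t \<in> carrier_vec N" unfolding t_def by (rule mult_mat_vec_carrier[OF T mult_mat_vec_carrier[OF F w']])
  have "(coord_proj N (- S) * baker_core K M A chi * mat_adjoint (fourier N) * coord_proj N S') *\<^sub>v w
      = (coord_proj N (- S) * baker_core K M A chi * mat_adjoint (fourier N)) *\<^sub>v w'"
    unfolding w'_def by (rule assoc_mult_mat_vec[OF mult_carrier_mat[OF mult_carrier_mat[OF P T] F] coord_proj_carrier w])
  also have "\<dots> = (coord_proj N (- S) * baker_core K M A chi) *\<^sub>v (mat_adjoint (fourier N) *\<^sub>v w')"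
    by (rule assoc_mult_mat_vec[OF mult_carrier_mat[OF P T] F w'])
  also have "\<dots> = coord_proj N (- S) *\<^sub>v t"
    unfolding t_def by (rule assoc_mult_mat_vec[OF P T mult_mat_vec_carrier[OF F w']])
  finally have Qw: "(coord_proj N (- S) * baker_core K M A chi * mat_adjoint (fourier N) * coord_proj N S') *\<^sub>v w
      = coord_proj N (- S) *\<^sub>v t" .
  have i: "a * K + j < N" unfolding N_def by (rule block_index_less[OF a j])
  have "t $ (a * K + j) = (if a \<in> A then of_real (chi (real j / real K)) *
      (\<Sum>\<xi><N. e2pi (real a * real \<xi> / real M) * baker_kernel K M chi j \<xi> * w' $ \<xi>) else 0)"
    using baker_core_fourier_adjoint_mult_vec[OF K M w'[unfolded N_def] a j, of A chi] unfolding t_def N_def .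
  then show ?thesis unfolding Qw coord_proj_mult_vec[OF t i] w'_def[symmetric] by auto
qed

text \<open>Where \<open>S'\<close> and the complement of \<open>S\<close> are \<open>d\<close>-separated, only the part of the kernel
  with \<open>K \<parallel>\<theta>\<parallel> \<ge> d / 2\<close> contributes.\<close>
lemma norm_far_block_entry_le:
  fixes S S' :: "nat set"
  assumes range: "\<And>x. 0 \<le> chi x \<and> chi x \<le> 1"
    and K: "0 < K" and M: "0 < M" and w: "w \<in> carrier_vec (K * M)" and a: "a < M" and j: "j < K"
    and dchi: "chi (real j / real K) \<noteq> 0 \<Longrightarrow> d \<le> 2 * real K * min (real j / real K) (1 - real j / real K)"
    and sep: "\<And>\<xi>. \<xi> < K * M \<Longrightarrow> a \<in> A \<Longrightarrow> \<xi> \<in> S' \<Longrightarrow> a * K + j \<notin> S \<Longrightarrow>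
       chi (real j / real K) \<noteq> 0 \<Longrightarrow> d < \<bar>real j - real \<xi> / real M\<bar>"
  defines "N \<equiv> K * M"
  shows "cmod (((coord_proj N (- S) * baker_core K M A chi * mat_adjoint (fourier N) * coord_proj N S') *\<^sub>v w) $ (a * K + j))
    \<le> cmod (\<Sum>\<xi><N. e2pi (real a * real \<xi> / real M) * (far_kernel K M chi d j \<xi> * (coord_proj N S' *\<^sub>v w) $ \<xi>))"
proof (cases "a * K + j \<notin> S \<and> a \<in> A \<and> chi (real j / real K) \<noteq> 0")
  case False
  then show ?thesis unfolding N_def far_block_mult_vec[OF K M w a j] by auto
next
  case True
  define w' where "w' = coord_proj N S' *\<^sub>v w"
  have w'e: "w' $ \<xi> = (if \<xi> \<in> S' then w $ \<xi> else 0)" if "\<xi> < N" for \<xi>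
    using w that unfolding w'_def N_def by (simp add: coord_proj_mult_vec del: index_mult_mat_vec)
  have "(\<Sum>\<xi><N. e2pi (real a * real \<xi> / real M) * baker_kernel K M chi j \<xi> * w' $ \<xi>)
      = (\<Sum>\<xi><N. e2pi (real a * real \<xi> / real M) * (far_kernel K M chi d j \<xi> * w' $ \<xi>))"
  proof (rule sum.cong[OF refl])
    fix \<xi> assume \<xi>: "\<xi> \<in> {..<N}"
    show "e2pi (real a * real \<xi> / real M) * baker_kernel K M chi j \<xi> * w' $ \<xi>
        = e2pi (real a * real \<xi> / real M) * (far_kernel K M chi d j \<xi> * w' $ \<xi>)"
    proof (cases "\<xi> \<in> S'")
      case False then show ?thesis using w'e[of \<xi>] \<xi> by simp
    next
      case True2: True
      have "d / 2 \<le> real K * circ_dist (kernel_phase K M j \<xi>) 0"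
        using far_of_separated[OF K M j _ dchi sep] \<xi> True True2 unfolding N_def by auto
      then show ?thesis unfolding far_kernel_def by simp
    qed
  qed
  moreover have "\<bar>chi (real j / real K)\<bar> \<le> 1" using range[of "real j / real K"] by simp
  ultimately show ?thesis
    unfolding N_def far_block_mult_vec[OF K M w a j] using True unfolding w'_def N_def
    by (simp add: norm_mult mult_left_le_one_le)
qed

lemma g_tilde_sq_eq_kernel_const:
  assumes chi: "Cc_inf_01 chi" and M: "0 < M" and d: "0 < d"
  shows "(g_tilde chi d)\<^sup>2 = (12 * kernel_const chi M d)\<^sup>2 * real M"
  unfolding g_tilde_def kernel_const_def using decay_profile_nonneg[OF chi, of "d / 2"] d M
  by (simp add: power2_eq_square field_simps)

lemma sum_sq_far_transform_le:
  assumes chi: "Cc_inf_01 chi" and range: "\<And>x. 0 \<le> chi x \<and> chi x \<le> 1"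
    and K: "0 < K" and M: "0 < M" and d: "0 < d"
  defines "\<beta> \<equiv> kernel_const chi M d"
  shows "(\<Sum>a<M. \<Sum>j<K. (cmod (\<Sum>\<xi><K * M. e2pi (real a * real \<xi> / real M) * (far_kernel K M chi d j \<xi> * v \<xi>)))\<^sup>2)
    \<le> 12 * \<beta> * real M * (\<Sum>j<K. \<Sum>\<xi><K * M. cmod (far_kernel K M chi d j \<xi>) * (cmod (v \<xi>))\<^sup>2)"
proof -
  define G where "G j \<xi> = far_kernel K M chi d j \<xi>" for j \<xi>
  have "(\<Sum>a<M. \<Sum>j<K. (cmod (\<Sum>\<xi><K * M. e2pi (real a * real \<xi> / real M) * (G j \<xi> * v \<xi>)))\<^sup>2)
      = (\<Sum>j<K. real M * (\<Sum>r<M. (cmod (\<Sum>t<K. G j (t * M + r) * v (t * M + r)))\<^sup>2))"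
    by (subst sum.swap) (intro sum.cong refl parseval_folded_exp_sum[OF M])
  also have "\<dots> \<le> (\<Sum>j<K. real M * (\<Sum>r<M. 12 * \<beta> * (\<Sum>t<K. cmod (G j (t * M + r)) * (cmod (v (t * M + r)))\<^sup>2)))"
  proof (intro sum_mono mult_left_mono)
    fix j r assume j: "j \<in> {..<K}" and r: "r \<in> {..<M}"
    have "(cmod (\<Sum>t<K. G j (t * M + r) * v (t * M + r)))\<^sup>2
        \<le> (\<Sum>t<K. cmod (G j (t * M + r))) * (\<Sum>t<K. cmod (G j (t * M + r)) * (cmod (v (t * M + r)))\<^sup>2)"
      by (rule norm_sum_sq_le_weighted)
    also have "\<dots> \<le> 12 * \<beta> * (\<Sum>t<K. cmod (G j (t * M + r)) * (cmod (v (t * M + r)))\<^sup>2)"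
      using sum_norm_far_kernel_row_le[OF chi range K M _ _ d, of j r] j r unfolding \<beta>_def G_def
      by (intro mult_right_mono sum_nonneg) auto
    finally show "(cmod (\<Sum>t<K. G j (t * M + r) * v (t * M + r)))\<^sup>2
        \<le> 12 * \<beta> * (\<Sum>t<K. cmod (G j (t * M + r)) * (cmod (v (t * M + r)))\<^sup>2)" .
  qed simp
  also have "\<dots> = 12 * \<beta> * real M * (\<Sum>j<K. \<Sum>r<M. \<Sum>t<K. cmod (G j (t * M + r)) * (cmod (v (t * M + r)))\<^sup>2)"
    by (simp add: sum_distrib_left mult.assoc mult.left_commute)
  also have "(\<Sum>j<K. \<Sum>r<M. \<Sum>t<K. cmod (G j (t * M + r)) * (cmod (v (t * M + r)))\<^sup>2)
      = (\<Sum>j<K. \<Sum>\<xi><K * M. cmod (G j \<xi>) * (cmod (v \<xi>))\<^sup>2)"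
  proof (rule sum.cong[OF refl])
    fix j
    have "(\<Sum>\<xi><K * M. cmod (G j \<xi>) * (cmod (v \<xi>))\<^sup>2) = (\<Sum>\<xi><M * K. cmod (G j \<xi>) * (cmod (v \<xi>))\<^sup>2)"
      by (simp add: mult.commute)
    also have "\<dots> = (\<Sum>t<K. \<Sum>r<M. cmod (G j (t * M + r)) * (cmod (v (t * M + r)))\<^sup>2)"
      by (rule sum_lessThan_mult_blocks)
    finally show "(\<Sum>r<M. \<Sum>t<K. cmod (G j (t * M + r)) * (cmod (v (t * M + r)))\<^sup>2)
        = (\<Sum>\<xi><K * M. cmod (G j \<xi>) * (cmod (v \<xi>))\<^sup>2)"
      by (simp add: sum.swap[of _ "{..<M}"])
  qed
  finally show ?thesis unfolding G_def .
qed

lemma op_bound_far_block: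
  fixes S S' :: "nat set"
  assumes chi: "Cc_inf_01 chi" and range: "\<And>x. 0 \<le> chi x \<and> chi x \<le> 1"
    and K: "0 < K" and M: "0 < M" and d: "0 < d"
    and dchi: "\<And>j. j < K \<Longrightarrow> chi (real j / real K) \<noteq> 0 \<Longrightarrow>
       d \<le> 2 * real K * min (real j / real K) (1 - real j / real K)"
    and sep: "\<And>\<xi> a j. \<xi> < K * M \<Longrightarrow> a \<in> A \<Longrightarrow> j < K \<Longrightarrow> \<xi> \<in> S' \<Longrightarrow> a * K + j \<notin> S \<Longrightarrow>
       chi (real j / real K) \<noteq> 0 \<Longrightarrow> d < \<bar>real j - real \<xi> / real M\<bar>"
  defines "N \<equiv> K * M"
  shows "op_bound N (coord_proj N (- S) * baker_core K M A chi * mat_adjoint (fourier N) * coord_proj N S') (g_tilde chi d)"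
proof (rule op_boundI_sq)
  show "0 \<le> g_tilde chi d" using g_tilde_nonneg[OF chi d] .
  fix w :: "complex vec" assume w: "w \<in> carrier_vec N"
  define Q where "Q = coord_proj N (- S) * baker_core K M A chi * mat_adjoint (fourier N) * coord_proj N S'"
  define w' where "w' = coord_proj N S' *\<^sub>v w"
  define \<beta> where "\<beta> = kernel_const chi M d"
  have \<beta>: "0 \<le> \<beta>" unfolding \<beta>_def by (rule kernel_const_nonneg[OF chi d])
  have w'c: "w' \<in> carrier_vec N" unfolding w'_def using w by (simp add: mult_mat_vec_carrier[OF coord_proj_carrier])
  have "sq_l2norm (Q *\<^sub>v w) = (\<Sum>i<K * M. (cmod ((Q *\<^sub>v w) $ i))\<^sup>2)"
    unfolding sq_l2norm_def Q_def N_def by simp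
  also have "\<dots> = (\<Sum>a<M. \<Sum>j<K. (cmod ((Q *\<^sub>v w) $ (a * K + j)))\<^sup>2)"
    by (rule sum_lessThan_mult_blocks)
  also have "\<dots> \<le> (\<Sum>a<M. \<Sum>j<K.
      (cmod (\<Sum>\<xi><K * M. e2pi (real a * real \<xi> / real M) * (far_kernel K M chi d j \<xi> * w' $ \<xi>)))\<^sup>2)"
    using norm_far_block_entry_le[OF range K M _ _ _ dchi sep] w unfolding Q_def w'_def N_def
    by (intro sum_mono power_mono) auto
  also have "\<dots> \<le> 12 * \<beta> * real M
      * (\<Sum>j<K. \<Sum>\<xi><K * M. cmod (far_kernel K M chi d j \<xi>) * (cmod (w' $ \<xi>))\<^sup>2)"
    unfolding \<beta>_def by (rule sum_sq_far_transform_le[OF chi range K M d])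
  also have "(\<Sum>j<K. \<Sum>\<xi><K * M. cmod (far_kernel K M chi d j \<xi>) * (cmod (w' $ \<xi>))\<^sup>2)
      = (\<Sum>\<xi><K * M. (cmod (w' $ \<xi>))\<^sup>2 * (\<Sum>j<K. cmod (far_kernel K M chi d j \<xi>)))"
    by (subst sum.swap) (simp add: sum_distrib_left mult.commute)
  also have "\<dots> \<le> (\<Sum>\<xi><K * M. (cmod (w' $ \<xi>))\<^sup>2 * (12 * \<beta>))"
    using sum_norm_far_kernel_col_le[OF chi range K M _ d] unfolding \<beta>_def by (intro sum_mono mult_left_mono) auto
  also have "\<dots> = 12 * \<beta> * sq_l2norm w'"
    unfolding sq_l2norm_def using w'c N_def by (simp add: sum_distrib_left[symmetric] mult.commute)
  also have "sq_l2norm w' \<le> sq_l2norm w" unfolding w'_def by (rule sq_l2norm_coord_proj_le[OF w])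
  finally have "sq_l2norm (Q *\<^sub>v w) \<le> 12 * \<beta> * real M * (12 * \<beta> * sq_l2norm w)"
    using \<beta> by (simp add: mult_left_mono)
  then show "sq_l2norm (Q *\<^sub>v w) \<le> (g_tilde chi d)\<^sup>2 * sq_l2norm w"
    unfolding g_tilde_sq_eq_kernel_const[OF chi M d] \<beta>_def by (simp add: power2_eq_square ac_simps)
qed

section \<open>The trapped set and the rank bound\<close>

primrec trapped_set :: "nat \<Rightarrow> nat set \<Rightarrow> (nat \<Rightarrow> real) \<Rightarrow> nat \<Rightarrow> real set" where
  "trapped_set M A dd 0 = {0..1}"
| "trapped_set M A dd (Suc k) = {y. \<exists>a\<in>A. \<exists>x\<in>trapped_set M A dd k. \<bar>y - (real a + x) / real M\<bar> \<le> dd (Suc k)}"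

primrec trapped_width :: "nat \<Rightarrow> (nat \<Rightarrow> real) \<Rightarrow> nat \<Rightarrow> real" where
  "trapped_width M dd 0 = 1"
| "trapped_width M dd (Suc k) = trapped_width M dd k / real M + 2 * dd (Suc k)"

lemma trapped_set_cover:
  assumes fin: "finite A" and M: "0 < M"
  shows "\<exists>W. finite W \<and> card W \<le> card A ^ k \<and>
    trapped_set M A dd k \<subseteq> (\<Union>c\<in>W. {c..c + trapped_width M dd k})"
proof (induction k)
  case 0
  show ?case by (intro exI[of _ "{0}"]) auto
next
  case (Suc k)
  then obtain W where W: "finite W" "card W \<le> card A ^ k"
    "trapped_set M A dd k \<subseteq> (\<Union>c\<in>W. {c..c + trapped_width M dd k})" by blast
  define f where "f = (\<lambda>(a::nat, c). (real a + c) / real M - dd (Suc k))"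
  define W' where "W' = f ` (A \<times> W)"
  have fW': "finite W'" unfolding W'_def using fin W(1) by simp
  have cW': "card W' \<le> card A ^ Suc k"
  proof -
    have "card W' \<le> card (A \<times> W)" unfolding W'_def by (rule card_image_le) (use fin W(1) in simp)
    also have "\<dots> = card A * card W" by (rule card_cartesian_product)
    also have "\<dots> \<le> card A * card A ^ k" using W(2) by simp
    finally show ?thesis by simp
  qed
  have "trapped_set M A dd (Suc k) \<subseteq> (\<Union>c\<in>W'. {c..c + trapped_width M dd (Suc k)})"
  proof
    fix y assume "y \<in> trapped_set M A dd (Suc k)"
    then obtain a x where a: "a \<in> A" and x: "x \<in> trapped_set M A dd k" and yx: "\<bar>y - (real a + x) / real M\<bar> \<le> dd (Suc k)"
      by auto
    have "x \<in> (\<Union>c\<in>W. {c..c + trapped_width M dd k})" using W(3) x by (rule subsetD)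
    then obtain c where c0: "c \<in> W" and cx: "x \<in> {c..c + trapped_width M dd k}" by (rule UN_E)
    then have c: "c \<in> W" "c \<le> x" "x \<le> c + trapped_width M dd k" by auto
    have "(real a + c) / real M \<le> (real a + x) / real M" using c M by (simp add: divide_right_mono)
    moreover have "(real a + x) / real M \<le> (real a + c) / real M + trapped_width M dd k / real M"
      using c M by (simp add: add_divide_distrib[symmetric] divide_right_mono)
    ultimately have "f (a, c) \<le> y \<and> y \<le> f (a, c) + trapped_width M dd (Suc k)"
      unfolding f_def using yx by auto
    moreover have "f (a, c) \<in> W'" unfolding W'_def using a c by auto
    ultimately show "y \<in> (\<Union>c\<in>W'. {c..c + trapped_width M dd (Suc k)})" by auto
  qed
  then show ?case using fW' cW' by blast
qed

lemma card_grid_points_le: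
  assumes N: "0 < N" and L: "0 \<le> L"
  shows "card {\<xi>::nat. \<xi> < N \<and> c \<le> real \<xi> / real N \<and> real \<xi> / real N \<le> c + L} \<le> real N * L + 1"
proof -
  define T where "T = {\<xi>::nat. \<xi> < N \<and> c \<le> real \<xi> / real N \<and> real \<xi> / real N \<le> c + L}"
  have fT: "finite T" unfolding T_def by simp
  show ?thesis
  proof (cases "T = {}")
    case True
    then show ?thesis unfolding T_def[symmetric] using L by simp
  next
    case False
    define m where "m = Min T"
    define m' where "m' = Max T"
    have mT: "m \<in> T" "m' \<in> T" unfolding m_def m'_def using fT False by auto
    have sub: "T \<subseteq> {m..m'}" unfolding m_def m'_def using fT by auto
    then have "card T \<le> m' + 1 - m" using card_mono[OF _ sub] by simp
    moreover have "m \<le> m'" using mT(2) sub by auto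
    ultimately have cT: "real (card T) \<le> real m' + 1 - real m" by (simp add: of_nat_diff)
    have "c \<le> real m / real N" "real m' / real N \<le> c + L" using mT unfolding T_def by auto
    then have "(real m' - real m) / real N \<le> L" by (simp add: diff_divide_distrib)
    then have "real m' - real m \<le> real N * L" using N by (simp add: divide_le_eq mult.commute)
    then show ?thesis using cT unfolding T_def by linarith
  qed
qed

lemma scaled_trapped_width:
  assumes M: "0 < M" and N: "0 < N"
  shows "real N * trapped_width M (\<lambda>k. d k / real N) k = real N / real M ^ k + 2 * (\<Sum>i=1..k. d i / real M ^ (k - i))"
proof (induction k)
  case 0 then show ?case by simp
next
  case (Suc k)
  have "real N * trapped_width M (\<lambda>k. d k / real N) (Suc k)
      = real N * trapped_width M (\<lambda>k. d k / real N) k / real M + 2 * d (Suc k)"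
    using N by (simp add: algebra_simps)
  also have "\<dots> = (real N / real M ^ k + 2 * (\<Sum>i=1..k. d i / real M ^ (k - i))) / real M + 2 * d (Suc k)"
    using Suc by simp
  also have "\<dots> = real N / real M ^ Suc k + 2 * ((\<Sum>i=1..k. d i / real M ^ (k - i)) / real M) + 2 * d (Suc k)"
    by (simp add: add_divide_distrib)
  also have "(\<Sum>i=1..k. d i / real M ^ (k - i)) / real M = (\<Sum>i=1..k. d i / real M ^ (Suc k - i))"
    unfolding sum_divide_distrib
  proof (rule sum.cong[OF refl])
    fix i assume i: "i \<in> {1..k}"
    then have "Suc k - i = Suc (k - i)" by auto
    then show "d i / real M ^ (k - i) / real M = d i / real M ^ (Suc k - i)" by simp
  qed
  also have "real N / real M ^ Suc k + 2 * (\<Sum>i=1..k. d i / real M ^ (Suc k - i)) + 2 * d (Suc k)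
      = real N / real M ^ Suc k + 2 * (\<Sum>i=1..Suc k. d i / real M ^ (Suc k - i))"
    by (simp add: algebra_simps)
  finally show ?case .
qed

definition trapped_freqs :: "nat \<Rightarrow> nat \<Rightarrow> nat set \<Rightarrow> (nat \<Rightarrow> real) \<Rightarrow> nat \<Rightarrow> nat set" where
  "trapped_freqs N M A dd k = {\<xi>. real \<xi> / real N \<in> trapped_set M A dd k}"

lemma rank_fourier_proj_trapped_le:
  assumes A: "finite A" and M: "0 < M" and N: "0 < N" and L: "0 \<le> trapped_width M dd k"
  shows "real (vec_space.rank N (fourier_proj N (trapped_freqs N M A dd k)))
    \<le> real (card A) ^ k * (real N * trapped_width M dd k + 1)"
proof -
  define L where "L = trapped_width M dd k"
  obtain W where W: "finite W" "card W \<le> card A ^ k" "trapped_set M A dd k \<subseteq> (\<Union>c\<in>W. {c..c + L})"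
    using trapped_set_cover[OF A M] unfolding L_def by blast
  define G where "G c = {\<xi>::nat. \<xi> < N \<and> c \<le> real \<xi> / real N \<and> real \<xi> / real N \<le> c + L}" for c
  have "trapped_freqs N M A dd k \<inter> {..<N} \<subseteq> (\<Union>c\<in>W. G c)"
    using W(3) unfolding trapped_freqs_def G_def by fastforce
  then have "card (trapped_freqs N M A dd k \<inter> {..<N}) \<le> card (\<Union>c\<in>W. G c)"
    using W(1) by (intro card_mono) (auto simp: G_def)
  also have "\<dots> \<le> (\<Sum>c\<in>W. card (G c))" by (rule card_UN_le[OF W(1)])
  finally have "real (vec_space.rank N (fourier_proj N (trapped_freqs N M A dd k))) \<le> (\<Sum>c\<in>W. real (card (G c)))"
    using rank_fourier_proj[of N "trapped_freqs N M A dd k"] by (metis of_nat_le_iff of_nat_sum order_trans)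
  also have "\<dots> \<le> (\<Sum>c\<in>W. real N * L + 1)"
    unfolding G_def using L_def L by (intro sum_mono card_grid_points_le[OF N]) auto
  also have "\<dots> \<le> real (card A) ^ k * (real N * L + 1)"
    using W(2) L N unfolding L_def by (simp add: mult_right_mono of_nat_power[symmetric] del: of_nat_power)
  finally show ?thesis unfolding L_def .
qed

lemma support_le_circ_dist:
  assumes chi: "Cc_inf_01 chi" and "chi x \<noteq> 0"
  shows "set_circ_dist (fsupp chi) {0} \<le> min x (1 - x)"
proof -
  have mem: "x \<in> fsupp chi" using assms(2) unfolding fsupp_def by (blast intro: subsetD[OF closure_subset])
  have sub: "fsupp chi \<subseteq> {0<..<1}" using chi unfolding Cc_inf_01_def by simp
  have "bdd_below {circ_dist x y | x y. x \<in> fsupp chi \<and> y \<in> {0}}"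
    using sub by (intro bdd_belowI[of _ 0]) (auto simp: circ_dist_def)
  then have "set_circ_dist (fsupp chi) {0} \<le> circ_dist x 0"
    unfolding set_circ_dist_def using mem by (intro cInf_lower) blast+
  also have "\<dots> = min x (1 - x)" using mem sub by (auto simp: circ_dist_def)
  finally show ?thesis .
qed

text \<open>Since \<open>(aK + j)/N - (a + \<xi>/N)/M = (j - \<xi>/M)/N\<close>, leaving the \<open>(k+1)\<close>-st trapped set
  through the branch \<open>a\<close> forces \<open>|j - \<xi>/M| > D\<close>.\<close>
lemma escaped_separated:
  assumes K: "0 < K" and M: "0 < M" and a: "a \<in> A"
    and in_k: "\<xi> \<in> trapped_freqs (K * M) M A dd k"
    and out: "a * K + j \<notin> trapped_freqs (K * M) M A dd (Suc k)"
    and D: "dd (Suc k) = D / real (K * M)"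
  shows "D < \<bar>real j - real \<xi> / real M\<bar>"
proof (rule ccontr)
  define N where "N = K * M"
  assume "\<not> D < \<bar>real j - real \<xi> / real M\<bar>"
  then have le: "\<bar>real j - real \<xi> / real M\<bar> \<le> D" by simp
  have "real (a * K + j) / real N - (real a + real \<xi> / real N) / real M = (real j - real \<xi> / real M) / real N"
    unfolding N_def using K M by (simp add: field_simps)
  then have "\<bar>real (a * K + j) / real N - (real a + real \<xi> / real N) / real M\<bar> \<le> dd (Suc k)"
    unfolding D N_def[symmetric] using le K M N_def by (simp add: abs_div divide_right_mono)
  then show False using a in_k out unfolding trapped_freqs_def N_def by auto
qed

lemma mat_adjoint_conj_mult:
  assumes F: "F \<in> carrier_mat N N" and U: "F * mat_adjoint F = 1\<^sub>m N"
    and P: "P \<in> carrier_mat N N" and T: "T \<in> carrier_mat N N" and P': "P' \<in> carrier_mat N N"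
  shows "(mat_adjoint F * P * F) * (mat_adjoint F * T) * (mat_adjoint F * P' * F) = mat_adjoint F * (P * T * mat_adjoint F * P') * F"
proof -
  have Fa: "mat_adjoint F \<in> carrier_mat N N" by (rule mat_adjoint_carrier[OF F])
  have c: "F * (mat_adjoint F * X) = X" if X: "X \<in> carrier_mat N N" for X
  proof -
    have "F * (mat_adjoint F * X) = (F * mat_adjoint F) * X" using F Fa X by simp
    also have "\<dots> = X" unfolding U using X by simp
    finally show ?thesis .
  qed
  have "(mat_adjoint F * P * F) * (mat_adjoint F * T) * (mat_adjoint F * P' * F)
      = mat_adjoint F * (P * (F * (mat_adjoint F * (T * (mat_adjoint F * (P' * F))))))"
    using F Fa P T P' by (simp add: assoc_mult_mat[of _ N N _ N _ N])
  also have "\<dots> = mat_adjoint F * (P * (T * (mat_adjoint F * (P' * F))))"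
    using F Fa P T P' by (simp add: c)
  also have "\<dots> = mat_adjoint F * (P * T * mat_adjoint F * P') * F"
    using F Fa P T P' by (simp add: assoc_mult_mat[of _ N N _ N _ N])
  finally show ?thesis .
qed


lemma op_bound_escape:
  assumes chi: "Cc_inf_01 chi" and range: "\<And>x. 0 \<le> chi x \<and> chi x \<le> 1"
    and K: "0 < K" and M: "0 < M" and A: "A \<subseteq> {0..<M}" and D: "0 < D"
    and D_supp: "D / real (K * M) \<le> 2 / real M * set_circ_dist (fsupp chi) {0}"
    and dd: "dd (Suc k) = D / real (K * M)"
  defines "N \<equiv> K * M" and "\<Omega> \<equiv> trapped_freqs (K * M) M A dd"
  shows "op_bound N ((1\<^sub>m N - fourier_proj N (\<Omega> (Suc k))) * baker M A chi K * fourier_proj N (\<Omega> k)) (g_tilde chi D)"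
proof -
  have N: "0 < N" unfolding N_def using K M by simp
  have margin: "D \<le> 2 * real K * min (real j / real K) (1 - real j / real K)"
    if "chi (real j / real K) \<noteq> 0" for j
  proof -
    have "D \<le> 2 / real M * set_circ_dist (fsupp chi) {0} * real (K * M)"
      using D_supp K M by (simp add: divide_le_eq)
    also have "\<dots> = 2 * real K * set_circ_dist (fsupp chi) {0}" using M by simp
    also have "\<dots> \<le> 2 * real K * min (real j / real K) (1 - real j / real K)"
      using support_le_circ_dist[OF chi that] K by (intro mult_left_mono) auto
    finally show ?thesis .
  qed
  have far: "op_bound N (coord_proj N (- \<Omega> (Suc k)) * baker_core K M A chi * mat_adjoint (fourier N)
      * coord_proj N (\<Omega> k)) (g_tilde chi D)"
  proof (unfold N_def, rule op_bound_far_block[OF chi range K M D margin])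
    fix \<xi> a j assume "a \<in> A" "\<xi> \<in> \<Omega> k" "a * K + j \<notin> \<Omega> (Suc k)"
    then show "D < \<bar>real j - real \<xi> / real M\<bar>"
      unfolding \<Omega>_def by (rule escaped_separated[where dd = dd and k = k, OF K M _ _ _ dd])
  qed
  have Q: "coord_proj N (- \<Omega> (Suc k)) * baker_core K M A chi * mat_adjoint (fourier N) * coord_proj N (\<Omega> k)
      \<in> carrier_mat N N"
    unfolding N_def using baker_core_carrier fourier_adjoint_carrier coord_proj_carrier by (metis mult_carrier_mat)
  have "(1\<^sub>m N - fourier_proj N (\<Omega> (Suc k))) * baker M A chi K * fourier_proj N (\<Omega> k)
      = mat_adjoint (fourier N) * (coord_proj N (- \<Omega> (Suc k)) * baker_core K M A chi * mat_adjoint (fourier N)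
        * coord_proj N (\<Omega> k)) * fourier N"
    unfolding one_minus_fourier_proj[OF N] unfolding baker_eq_fourier_adjoint_mult_core[OF K A] fourier_proj_def N_def
    by (rule mat_adjoint_conj_mult) (auto simp: fourier_carrier fourier_mult_adjoint K M baker_core_carrier)
  then show ?thesis
    using op_bound_unitary_conj[OF fourier_carrier fourier_adjoint_mult[OF N] fourier_mult_adjoint[OF N] Q far] by simp
qed

lemma rank_trapped_fourier_proj_le:
  fixes A :: "nat set" and d :: "nat \<Rightarrow> real"
  assumes M2: "M \<ge> 2" and A: "A \<subseteq> {0..<M}" "A \<noteq> {}" and K: "K \<ge> 1"
    and lN: "real l \<le> ln (real (K * M)) / ln (real M)" and d: "\<And>j. j \<in> {1..l} \<Longrightarrow> 0 < d j"
  defines "N \<equiv> K * M"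
  shows "real (vec_space.rank N (fourier_proj N (trapped_freqs N M A (\<lambda>k. d k / real N) l)))
    \<le> 2 * real M powr (real l * (ln (real (card A)) / ln (real M)))
        * (real N / real M ^ l + 2 * (\<Sum>k=1..l. d k / real M ^ (l - k)))"
proof -
  define Q where "Q = real N / real M ^ l + 2 * (\<Sum>k=1..l. d k / real M ^ (l - k))"
  have M: "0 < M" and N: "0 < N" and lnM: "0 < ln (real M)" using M2 K unfolding N_def by auto
  have finA: "finite A" using A(1) finite_subset by blast
  have NL: "real N * trapped_width M (\<lambda>k. d k / real N) l = Q"
    unfolding Q_def by (rule scaled_trapped_width[OF M N])
  have "real l * ln (real M) \<le> ln (real N)" using lN lnM unfolding N_def by (simp add: le_divide_eq)
  then have "real M ^ l \<le> real N" using M N by (simp add: ln_realpow[symmetric])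
  then have "1 \<le> real N / real M ^ l" using M by simp
  moreover have "0 \<le> (\<Sum>k=1..l. d k / real M ^ (l - k))"
    using d M by (intro sum_nonneg divide_nonneg_pos less_imp_le) auto
  ultimately have Q1: "1 \<le> Q" unfolding Q_def by linarith
  then have L0: "0 \<le> trapped_width M (\<lambda>k. d k / real N) l"
    using NL N by (metis zero_le_one order_trans zero_le_mult_iff of_nat_0_less_iff not_less)
  have "real (vec_space.rank N (fourier_proj N (trapped_freqs N M A (\<lambda>k. d k / real N) l)))
      \<le> real (card A) ^ l * (Q + 1)"
    using rank_fourier_proj_trapped_le[OF finA M N L0] unfolding NL .
  also have "\<dots> \<le> 2 * real (card A) ^ l * Q"
    using mult_right_mono[OF Q1, of "real (card A) ^ l"] by (simp add: algebra_simps)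
  also have "real (card A) ^ l = exp (real l * ln (real (card A)))"
    using finA A(2) by (simp add: exp_of_nat_mult[symmetric] ln_realpow[symmetric] card_gt_0_iff)
  also have "\<dots> = real M powr (real l * (ln (real (card A)) / ln (real M)))"
    unfolding powr_def using M lnM by simp
  finally show ?thesis unfolding Q_def .
qed

lemma one_eq_parametrix:
  assumes B: "B \<in> carrier_mat N N" and X: "\<And>k. X k \<in> carrier_mat N N"
    and X0: "X 0 = 1\<^sub>m N" and z: "z \<noteq> 0"
  shows "1\<^sub>m N = parametrix N B X z k * (B - z \<cdot>\<^sub>m 1\<^sub>m N) + parametrix_rem N B X z k + X k"
proof (rule eq_matI)
  fix i j assume "i < dim_row (parametrix N B X z k * (B - z \<cdot>\<^sub>m 1\<^sub>m N) + parametrix_rem N B X z k + X k)"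
    "j < dim_col (parametrix N B X z k * (B - z \<cdot>\<^sub>m 1\<^sub>m N) + parametrix_rem N B X z k + X k)"
  then have ij: "i < N" "j < N" using X[of k] by auto
  have "(1\<^sub>m N - X k) $$ (i, j) = (parametrix N B X z k * (B - z \<cdot>\<^sub>m 1\<^sub>m N) + parametrix_rem N B X z k) $$ (i, j)"
    by (simp only: parametrix_identity[where X = X, OF B X X0 z])
  then show "1\<^sub>m N $$ (i, j) = (parametrix N B X z k * (B - z \<cdot>\<^sub>m 1\<^sub>m N) + parametrix_rem N B X z k + X k) $$ (i, j)"
    using ij X[of k] B parametrix_carrier[OF B X] by (simp add: algebra_simps)
qed (use X[of k] in auto)

lemma op_bound_trapped_chain:
  assumes chi: "Cc_inf_01 chi" and range: "\<And>x. 0 \<le> chi x \<and> chi x \<le> 1"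
    and K: "0 < K" and M: "0 < M" and A: "A \<subseteq> {0..<M}"
    and d: "\<And>j. j \<in> {1..l} \<Longrightarrow> 0 < d j"
    and d_supp: "\<And>j. j \<in> {1..l} \<Longrightarrow> d j / real (K * M) \<le> 2 / real M * set_circ_dist (fsupp chi) {0}"
  defines "N \<equiv> K * M"
    and "X \<equiv> \<lambda>k. fourier_proj (K * M) (trapped_freqs (K * M) M A (\<lambda>k. d k / real (K * M)) k)"
  shows op_bound_escaping_baker: "op_bound N ((1\<^sub>m N - X (Suc k)) * baker M A chi K) 1"
    and op_bound_trapped_step: "op_bound N ((1\<^sub>m N - X (Suc k)) * baker M A chi K * X k)
      (if Suc k \<in> {1..l} then g_tilde chi (d (Suc k)) else 1)"
proof -
  have N: "0 < N" unfolding N_def using K M by simp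
  have B: "baker M A chi K \<in> carrier_mat N N" unfolding baker_def N_def by simp
  have X: "X k \<in> carrier_mat N N" for k unfolding X_def N_def by simp
  have "op_bound N (baker M A chi K) 1" unfolding N_def by (rule op_bound_baker[OF K M A range])
  then show YB: "op_bound N ((1\<^sub>m N - X (Suc k)) * baker M A chi K) 1" for k
    using op_bound_mult[OF fourier_proj_carrier B op_bound_fourier_proj[OF N]]
    unfolding X_def N_def[symmetric] one_minus_fourier_proj[OF N] by simp
  show "op_bound N ((1\<^sub>m N - X (Suc k)) * baker M A chi K * X k)
      (if Suc k \<in> {1..l} then g_tilde chi (d (Suc k)) else 1)"
  proof (cases "Suc k \<in> {1..l}")
    case True
    then show ?thesis
      using op_bound_escape[where dd = "\<lambda>k. d k / real (K * M)" and k = k and D = "d (Suc k)",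
          OF chi range K M A d[OF True] d_supp[OF True]]
      unfolding X_def N_def by auto
  next
    case False
    have "op_bound N ((1\<^sub>m N - X (Suc k)) * baker M A chi K * X k) (1 * 1)"
      by (rule op_bound_mult[OF mult_carrier_mat[OF minus_carrier_mat[OF X] B] X YB])
        (auto simp: X_def N_def[symmetric] op_bound_fourier_proj[OF N])
    then show ?thesis using False by simp
  qed
qed

lemma baker_decomposition:
  fixes chi :: "real \<Rightarrow> real" and \<A> :: "nat set" and d :: "nat \<Rightarrow> real"
  assumes chi: "Cc_inf_01 chi" and range: "\<And>x. 0 \<le> chi x \<and> chi x \<le> 1"
    and M2: "M \<ge> 2" and A: "\<A> \<subseteq> {0..<M}" "\<A> \<noteq> {}" and K1: "K \<ge> 1"
    and lN: "real l \<le> ln (real (K * M)) / ln (real M)"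
    and dh: "\<forall>j\<in>{1..l}. 0 < d j / real (K * M) \<and> d j / real (K * M) \<le> 2 / real M * set_circ_dist (fsupp chi) {0}"
  defines "N \<equiv> K * M"
  shows "\<exists>A Z \<R>. A \<in> carrier_mat N N \<and> fourier_multiplier N A \<and>
           (\<forall>z::complex. z \<noteq> 0 \<longrightarrow>
              Z z \<in> carrier_mat N N \<and> \<R> z \<in> carrier_mat N N \<and>
              1\<^sub>m N = Z z * (baker M \<A> chi K - z \<cdot>\<^sub>m 1\<^sub>m N) + \<R> z + A \<and>
              op_norm N (\<R> z) \<le> (\<Sum>j<l. (1 / cmod z) ^ (j + 1) * g_tilde chi (d (l - j)))) \<and>
           real (vec_space.rank N A) \<le> 2 * real M powr (real l * (ln (real (card \<A>)) / ln (real M))) *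
              (real N / real M ^ l + 2 * (\<Sum>k=1..l. d k / real M ^ (l - k)))"
proof -
  have K: "0 < K" and M: "0 < M" and N: "0 < N" using K1 M2 unfolding N_def by auto
  have "0 < real K * real M" using K M by simp
  then have d: "0 < d j" if "j \<in> {1..l}" for j
    using dh that by (auto simp: zero_less_divide_iff)
  define X where "X k = fourier_proj N (trapped_freqs N M \<A> (\<lambda>k. d k / real N) k)" for k
  define B where "B = baker M \<A> chi K"
  define \<epsilon> where "\<epsilon> k = (if k \<in> {1..l} then g_tilde chi (d k) else 1)" for k
  have X: "X k \<in> carrier_mat N N" for k unfolding X_def by simp
  have B: "B \<in> carrier_mat N N" unfolding B_def baker_def N_def by simp
  have X0: "X 0 = 1\<^sub>m N"
    unfolding X_def using N by (intro fourier_proj_full) (auto simp: trapped_freqs_def)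
  have YB: "op_bound N ((1\<^sub>m N - X (Suc k)) * B) 1"
    and eps: "op_bound N ((1\<^sub>m N - X (Suc k)) * B * X k) (\<epsilon> (Suc k))" for k
    using op_bound_trapped_chain[where d = d and l = l, OF chi range K M A(1) d] dh
    unfolding X_def B_def \<epsilon>_def N_def by auto
  have identity: "1\<^sub>m N = parametrix N B X z l * (B - z \<cdot>\<^sub>m 1\<^sub>m N) + parametrix_rem N B X z l + X l"
    if "z \<noteq> 0" for z
    by (rule one_eq_parametrix[where X = X, OF B X X0 that])
  have remainder: "op_norm N (parametrix_rem N B X z l) \<le> (\<Sum>j<l. (1 / cmod z) ^ (j + 1) * g_tilde chi (d (l - j)))" for z
  proof -
    have "(\<Sum>j<l. (1 / cmod z) ^ (j + 1) * \<epsilon> (l - j)) = (\<Sum>j<l. (1 / cmod z) ^ (j + 1) * g_tilde chi (d (l - j)))"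
      unfolding \<epsilon>_def by (intro sum.cong refl) auto
    moreover have "0 \<le> (\<Sum>j<l. (1 / cmod z) ^ (j + 1) * g_tilde chi (d (l - j)))"
      using g_tilde_nonneg[OF chi] d by (intro sum_nonneg mult_nonneg_nonneg) auto
    ultimately show ?thesis
      using op_norm_le[OF op_bound_parametrix_rem[where X = X and \<epsilon> = \<epsilon> and z = z and k = l, OF B X YB eps]] by simp
  qed
  show ?thesis unfolding B_def[symmetric]
  proof (rule exI[of _ "X l"], rule exI[of _ "\<lambda>z. parametrix N B X z l"],
      rule exI[of _ "\<lambda>z. parametrix_rem N B X z l"],
      intro conjI allI impI identity remainder X parametrix_carrier[OF B X])
    show "fourier_multiplier N (X l)" unfolding X_def by (rule fourier_multiplier_fourier_proj)
    show "real (vec_space.rank N (X l)) \<le> 2 * real M powr (real l * (ln (real (card \<A>)) / ln (real M)))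
        * (real N / real M ^ l + 2 * (\<Sum>k=1..l. d k / real M ^ (l - k)))"
      unfolding X_def N_def by (rule rank_trapped_fourier_proj_le[OF M2 A K1 lN d])
  qed
qed

theorem proposition2:
  fixes chi :: "real \<Rightarrow> real"
  assumes chi_smooth: "Cc_inf_01 chi"
    and chi_range: "\<And>x. 0 \<le> chi x \<and> chi x \<le> 1"
  shows "\<exists>g :: real \<Rightarrow> real.
     (\<forall>x>0. 0 \<le> g x) \<and>
     (\<forall>n::nat. \<exists>C>0. \<forall>x>0. g x \<le> C * x powr (- real n)) \<and>
     (\<forall>s>1. gevrey_c01 s chi \<longrightarrow> (\<exists>C>0. \<exists>c>0. \<forall>x>0. g x \<le> C * exp (- c * x powr (1 / s)))) \<and>
     (\<forall>(M::nat) (\<A>::nat set) (K::nat) (l::nat) (d::nat \<Rightarrow> real).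
        M \<ge> 2 \<longrightarrow> \<A> \<subseteq> {0..<M} \<longrightarrow> \<A> \<noteq> {} \<longrightarrow> K \<ge> 1 \<longrightarrow>
        0 < l \<longrightarrow> real l \<le> ln (real (K * M)) / ln (real M) \<longrightarrow>
        (\<forall>j\<in>{1..l}. 0 < d j / real (K * M) \<and>
            d j / real (K * M) \<le> 2 / real M * set_circ_dist (fsupp chi) {0}) \<longrightarrow>
        (let N = K * M; \<delta> = ln (real (card \<A>)) / ln (real M) in
         \<exists>A Z \<R>. A \<in> carrier_mat N N \<and> fourier_multiplier N A \<and>
           (\<forall>z::complex. z \<noteq> 0 \<longrightarrow>
              Z z \<in> carrier_mat N N \<and> \<R> z \<in> carrier_mat N N \<and>
              1\<^sub>m N = Z z * (baker M \<A> chi K - z \<cdot>\<^sub>m 1\<^sub>m N) + \<R> z + A \<and>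
              op_norm N (\<R> z) \<le> (\<Sum>j<l. (1 / cmod z) ^ (j + 1) * g (d (l - j)))) \<and>
           real (vec_space.rank N A) \<le> 2 * real M powr (real l * \<delta>) *
              (real N / real M ^ l + 2 * (\<Sum>k=1..l. d k / real M ^ (l - k)))))"
proof (intro exI[of _ "g_tilde chi"] conjI allI impI)
  show "0 \<le> g_tilde chi x" if "x > 0" for x using g_tilde_nonneg[OF chi_smooth that] .
  show "\<exists>C>0. \<forall>x>0. g_tilde chi x \<le> C * x powr (- real n)" for n
    by (rule g_tilde_poly_decay[OF chi_smooth])
  show "\<exists>C>0. \<exists>c>0. \<forall>x>0. g_tilde chi x \<le> C * exp (- c * x powr (1 / s))" if "s > 1" "gevrey_c01 s chi" for s
    by (rule g_tilde_gevrey_decay[OF chi_smooth that])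
qed (unfold Let_def, rule baker_decomposition[OF chi_smooth chi_range], assumption+)

end
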